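(* Let Assumptions 1 and 2 hold and let $K<\mu<1$. There exists a constant $R_\mu>0$ such that, for every $\tau\in(0,1)$, if $x^{(0)}\in U\cap\Sigma$ satisfies $0<\|r^{(0)}\|_2\le R_\mu\tau^{2p}$ and one runs version P of the restarted Anderson–Pulay acceleration with parameter $\tau$ (or version A when $\Sigma=\mathbb{R}^n$), then the sequences $(x^{(k)})$, $(r^{(k)})$ are well defined and, as long as $r^{(k)}\ne0$: $$m_k\le\min(k,p),\qquad \|c^{(k)}\|_\infty\le C_{m_k}\Big(1+\frac{1}{(\tau(1-\mu))^{m_k}}\Big),\qquad \|r^{(k+1)}\|_2\le\mu^{m_k+1}\|r^{(k-m_k)}\|_2,$$ where $C_{m_k}>0$ depends only on $m_k$. Consequently $\|r^{(k)}\|_2\le\mu^k\|r^{(0)}\|_2$ for all $k\in\mathbb{N}$ (local r-linear convergence). Moreover there exists a constant $\Gamma>0$ independent of $\tau$ such that, whenever a restart occurs at step $k+1$ (i.e. $m_{k+1}=0$), $$\big(1-K(1+\tau)\big)\|r^{(k+1)}\|_2\le\Big(K\tau+\frac{\Gamma}{\tau^{2m_k}}\|r^{(k-m_k)}\|_2\Big)\|r^{(k-m_k)}\|_2 .$$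
   Context: All norms $\|\cdot\|_2$ are Euclidean. Let $n,p\ge1$ be integers, $\Sigma$ a smooth submanifold of $\mathbb{R}^n$, $V\subset\mathbb{R}^n$ open, $f\in\mathscr{C}^2(V,\mathbb{R}^p)$, $g\in\mathscr{C}^2(V,\Sigma)$, and $x_*\in V\cap\Sigma$ with $g(x_* )=x_*$, $f(x_* )=0$. Assumption 1: there is $K\in(0,1)$ with $\|f(g(x))\|_2\le K\|f(x)\|_2$ for all $x\in V\cap g^{-1}(V)\cap\Sigma$. Assumption 2: there is $\sigma>0$ with $\sigma\|x-x_*\|_2\le\|f(x)\|_2$ for all $x\in V\cap\Sigma$. $U\subset V\cap g^{-1}(V)$ is a fixed open neighbourhood of $x_*$ such that: (i) for all $x,y\in U$, $\|f(x)-f(y)\|_2\le 2\|\mathrm{D}f(x_* )\|_2\|x-y\|_2$ and $\|f(g(x))-f(g(y))\|_2\le 2\|\mathrm{D}f(x_* )\circ \mathrm{D}g(x_* )\|_2\|x-y\|_2$; (ii) there are $L,L'>0$ with $\|f(x)-\mathrm{D}f(x_* )(x-x_* )\|_2\le\frac L2\|x-x_*\|_2^2$ and $\|g(x)-x_*-\mathrm{D}g(x_* )(x-x_* )\|_2\le\frac{L'}2\|x-x_*\|_2^2$ on $U$; (iii) $U$ is a tubular neighbourhood of $\Sigma\cap U$ on which the nearest-point projection $P_\Sigma$ onto $\Sigma$ is well defined and smooth, and for some $M>0$, $\|P_\Sigma(x)-(x_*+P_{T_{x_*}\Sigma}(x-x_* ))\|_2\le\frac M2\|x-x_*\|_2^2$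 on $U$ ($P_{T_{x_*}\Sigma}$ the orthogonal projector onto the tangent space at $x_*$). Restarted Anderson–Pulay acceleration with parameter $\tau\in(0,1)$: given $x^{(0)}$, set $r^{(0)}=f(x^{(0)})$, $m_0=0$. At step $k$: if $m_k=0$, set $c^{(k)}=(1)$ and $x^{(k+1)}=g(x^{(k)})$; otherwise let $c^{(k)}=(c^{(k)}_0,\dots,c^{(k)}_{m_k})$ minimise $\|\sum_{i=0}^{m_k}c_i r^{(k-m_k+i)}\|_2$ subject to $\sum_i c_i=1$, and set $x^{(k+1)}=g\big(\sum_{i=0}^{m_k}c^{(k)}_i x^{(k-m_k+i)}\big)$ (version P) or $x^{(k+1)}=\sum_{i=0}^{m_k}c^{(k)}_i g(x^{(k-m_k+i)})$ (version A, used only when $\Sigma=\mathbb{R}^n$). Then $r^{(k+1)}=f(x^{(k+1)})$; with $s^{(j)}=r^{(j)}-r^{(k-m_k)}$ for $j=k-m_k+1,\dots,k+1$ and $\Pi_k$ the orthogonal projector onto $\mathrm{span}\{s^{(k-m_k+1)},\dots,s^{(k)}\}$ ($\Pi_k=0$ if $m_k=0$): if $\tau\|s^{(k+1)}\|_2>\|(I-\Pi_k)s^{(k+1)}\|_2$ set $m_{k+1}=0$ (restart), else $m_{k+1}=m_k+1$. Convention: if $r^{(k_{\rm stop})}=0$ for some $k_{\rm stop}$, then $x^{(k)}=x^{(k_{\rm stop})}$, $r^{(k)}=0$, $m_k=0$ for all $k\ge k_{\rm stop}$. *)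

theory Defs
  imports "HOL-Analysis.Analysis"
begin

fun iter_pderiv :: "'a::euclidean_space list \<Rightarrow> ('a \<Rightarrow> 'b::real_normed_vector) \<Rightarrow> 'a \<Rightarrow> 'b" where
  "iter_pderiv [] f = f"
| "iter_pderiv (v # vs) f = (\<lambda>x. frechet_derivative (iter_pderiv vs f) (at x) v)"

definition Ck_on :: "nat \<Rightarrow> 'a::euclidean_space set \<Rightarrow> ('a \<Rightarrow> 'b::real_normed_vector) \<Rightarrow> bool" where
  "Ck_on k S f \<longleftrightarrow> open S \<and>
     (\<forall>vs. set vs \<subseteq> Basis \<and> length vs < k \<longrightarrow> (\<forall>x\<in>S. iter_pderiv vs f differentiable (at x))) \<and>
     (\<forall>vs. set vs \<subseteq> Basis \<and> length vs \<le> k \<longrightarrow> continuous_on S (iter_pderiv vs f))"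

definition smooth_on :: "'a::euclidean_space set \<Rightarrow> ('a \<Rightarrow> 'b::real_normed_vector) \<Rightarrow> bool" where
  "smooth_on S f \<longleftrightarrow> (\<forall>k. Ck_on k S f)"

definition smooth_submanifold :: "'a::euclidean_space set \<Rightarrow> bool" where
  "smooth_submanifold \<Sigma> \<longleftrightarrow> (\<exists>d. \<forall>x\<in>\<Sigma>. \<exists>W W' (\<psi>::'a \<Rightarrow> 'a) \<psi>' L.
      open W \<and> x \<in> W \<and> open W' \<and> smooth_on W \<psi> \<and> smooth_on W' \<psi>' \<and>
      \<psi> ` W = W' \<and> (\<forall>y\<in>W. \<psi>' (\<psi> y) = y) \<and> (\<forall>z\<in>W'. \<psi> (\<psi>' z) = z) \<and>
      subspace L \<and> dim L = d \<and> \<psi> ` (\<Sigma> \<inter> W) = W' \<inter> L)"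

definition tangent_space :: "'a::euclidean_space set \<Rightarrow> 'a \<Rightarrow> 'a set" where
  "tangent_space \<Sigma> x = {v. \<exists>(\<gamma>::real \<Rightarrow> 'a) e. e > 0 \<and> \<gamma> 0 = x \<and>
      (\<forall>t. \<bar>t\<bar> < e \<longrightarrow> \<gamma> t \<in> \<Sigma>) \<and> (\<gamma> has_vector_derivative v) (at 0)}"

definition orth_proj :: "'a::real_inner set \<Rightarrow> 'a \<Rightarrow> 'a" where
  "orth_proj T x = (THE y. y \<in> T \<and> (\<forall>z\<in>T. inner (x - y) z = 0))"

definition nearest_proj :: "'a::real_normed_vector set \<Rightarrow> 'a \<Rightarrow> 'a" where
  "nearest_proj S x = (THE y. y \<in> S \<and> (\<forall>z\<in>S. dist x y \<le> dist x z))"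

text \<open>A run of restarted Anderson--Pulay acceleration with parameter tau started at x0.
 vA = True selects version A, vA = False version P.  The coefficient vector c^(k) is
 stored as the function i \<mapsto> c k i on indices 0..m k (c k is any minimiser).
 Stopping convention: once r k = 0, the iterate is frozen and m k = 0.\<close>

definition AP_run :: "('a::euclidean_space \<Rightarrow> 'b::euclidean_space) \<Rightarrow> ('a \<Rightarrow> 'a) \<Rightarrow> real \<Rightarrow> bool \<Rightarrow> 'a
    \<Rightarrow> (nat \<Rightarrow> 'a) \<Rightarrow> (nat \<Rightarrow> 'b) \<Rightarrow> (nat \<Rightarrow> nat) \<Rightarrow> (nat \<Rightarrow> nat \<Rightarrow> real) \<Rightarrow> bool" where
  "AP_run f g \<tau> vA x0 x r m c \<longleftrightarrow>
     x 0 = x0 \<and> m 0 = 0 \<and> (\<forall>k. r k = f (x k)) \<and>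
     (\<forall>k. r k = 0 \<longrightarrow> m k = 0 \<and> x (Suc k) = x k) \<and>
     (\<forall>k. r k \<noteq> 0 \<longrightarrow>
        (\<Sum>i\<le>m k. c k i) = 1 \<and>
        (\<forall>d. (\<Sum>i\<le>m k. d i) = 1 \<longrightarrow>
           norm (\<Sum>i\<le>m k. c k i *\<^sub>R r (k - m k + i)) \<le> norm (\<Sum>i\<le>m k. d i *\<^sub>R r (k - m k + i))) \<and>
        x (Suc k) = (if vA then (\<Sum>i\<le>m k. c k i *\<^sub>R g (x (k - m k + i)))
                     else g (\<Sum>i\<le>m k. c k i *\<^sub>R x (k - m k + i))) \<and>
        (r (Suc k) \<noteq> 0 \<longrightarrow>
          (let s = (\<lambda>j. r j - r (k - m k));
               Pk = orth_proj (span {s j | j. k - m k + 1 \<le> j \<and> j \<le> k})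
           in m (Suc k) = (if \<tau> * norm (s (Suc k)) > norm (s (Suc k) - Pk (s (Suc k)))
                           then 0 else Suc (m k)))))"

end

theory Submission
  imports Defs
begin

text \<open>
  Near the fixed point, f and g are linear up to second order, and an affine combination of points
  of \<Sigma> lies within second order of \<Sigma>. Hence one accelerated step with coefficients c applied to
  window iterates at distance \<epsilon> from xs obeys
  norm r(k+1) \<le> K norm (\<Sum> c_i r_i) + G (\<Sum> |c_i|)^2 \<epsilon>^2,
  and the minimality of c bounds norm (\<Sum> c_i r_i) by norm r(k).

  The restart test keeps every difference s_j = r(b+j) - r(b) of the current window at distance at
  least \<tau> norm s_j from the span of the earlier ones. This makes the differences independent, so
  m_k \<le> p, and, since norm s_j is comparable to norm r(b) while the residuals contract, it bounds the
  coefficients by C_m (\<tau>(1-\<mu>))^(-m). With norm r(0) \<le> R \<tau>^(2p) the quadratic term is then at most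
  (\<mu> - K) \<mu>^m norm r(b), and induction over k gives norm r(k+1) \<le> \<mu>^(m+1) norm r(b). At a restart
  the new difference is almost in the span of the old ones, so the residual of r(b) after projection,
  itself an affine combination of the window, is small; this is the restart inequality.
\<close>

section \<open>Orthogonal projections and bounded coefficients\<close>

lemma orth_proj_eqI:
  fixes S :: "'a::euclidean_space set"
  assumes "subspace S" "y \<in> S" "\<And>z. z \<in> S \<Longrightarrow> inner (x - y) z = 0"
  shows "orth_proj S x = y"
  unfolding orth_proj_def
proof (rule the_equality)
  show "y \<in> S \<and> (\<forall>z\<in>S. inner (x - y) z = 0)" using assms by auto
  fix y' assume y': "y' \<in> S \<and> (\<forall>z\<in>S. inner (x - y') z = 0)"
  have "y' - y \<in> S" using y' assms subspace_diff by blast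
  then have "inner (x - y) (y' - y) - inner (x - y') (y' - y) = 0" using y' assms by auto
  then have "inner (y' - y) (y' - y) = 0" by (simp add: inner_diff_left)
  then show "y' = y" by simp
qed

lemma
  fixes S :: "'a::euclidean_space set"
  assumes "subspace S"
  shows orth_proj_in: "orth_proj S x \<in> S"
    and orth_proj_orthogonal: "z \<in> S \<Longrightarrow> inner (x - orth_proj S x) z = 0"
proof -
  obtain y z where y: "y \<in> span S" and z: "\<And>w. w \<in> span S \<Longrightarrow> orthogonal z w" and x: "x = y + z"
    using orthogonal_subspace_decomp_exists by blast
  have S: "span S = S" using assms by (simp add: span_eq_iff)
  have "orth_proj S x = y"
    using y z x S by (intro orth_proj_eqI[OF assms]) (auto simp: orthogonal_def)
  then show "orth_proj S x \<in> S" "z \<in> S \<Longrightarrow> inner (x - orth_proj S x) z = 0" for z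
    using y z[of z] x S by (simp_all add: orthogonal_def)
qed

lemma orth_proj_self:
  fixes S :: "'a::euclidean_space set"
  assumes "subspace S" "x \<in> S"
  shows "orth_proj S x = x"
  using assms by (intro orth_proj_eqI) auto

lemma linear_orth_proj:
  fixes S :: "'a::euclidean_space set"
  assumes "subspace S"
  shows "linear (orth_proj S)"
proof
  fix x y
  show "orth_proj S (x + y) = orth_proj S x + orth_proj S y"
  proof (rule orth_proj_eqI[OF assms])
    show "orth_proj S x + orth_proj S y \<in> S"
      by (simp add: assms orth_proj_in subspace_add)
    show "inner (x + y - (orth_proj S x + orth_proj S y)) z = 0" if "z \<in> S" for z
      using orth_proj_orthogonal[OF assms that, of x] orth_proj_orthogonal[OF assms that, of y]
      by (simp add: inner_diff_left inner_add_left)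
  qed
next
  fix c x
  show "orth_proj S (c *\<^sub>R x) = c *\<^sub>R orth_proj S x"
  proof (rule orth_proj_eqI[OF assms])
    show "c *\<^sub>R orth_proj S x \<in> S"
      by (simp add: assms orth_proj_in subspace_scale)
    show "inner (c *\<^sub>R x - c *\<^sub>R orth_proj S x) z = 0" if "z \<in> S" for z
      using orth_proj_orthogonal[OF assms that, of x]
      by (simp add: scaleR_right_diff_distrib[symmetric])
  qed
qed

lemma norm_diff_orth_proj_le:
  fixes S :: "'a::euclidean_space set"
  assumes "subspace S"
  shows "norm (x - orth_proj S x) \<le> norm x"
proof -
  let ?p = "orth_proj S x"
  have "(norm x)\<^sup>2 = (norm ((x - ?p) + ?p))\<^sup>2" by simp
  also have "\<dots> = (norm (x - ?p))\<^sup>2 + (norm ?p)\<^sup>2"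
    using orth_proj_orthogonal[OF assms orth_proj_in[OF assms]]
    by (intro norm_add_Pythagorean) (simp add: orthogonal_def)
  finally have "(norm (x - ?p))\<^sup>2 \<le> (norm x)\<^sup>2"
    using zero_le_power2[of "norm ?p"] by linarith
  then show ?thesis by (simp add: power2_le_iff_abs_le)
qed

lemma mem_span_image_sum:
  fixes h :: "nat \<Rightarrow> 'a::real_vector"
  assumes "finite A" "v \<in> span (h ` A)"
  shows "\<exists>\<gamma>. v = (\<Sum>l\<in>A. \<gamma> l *\<^sub>R h l)"
  using assms(2)
proof (induction rule: span_induct_alt)
  case base
  show ?case by (rule exI[of _ "\<lambda>_. 0"]) simp
next
  case (step c x y)
  obtain a where a: "a \<in> A" "x = h a" using step(1) by blast
  obtain \<gamma> where y: "y = (\<Sum>l\<in>A. \<gamma> l *\<^sub>R h l)" using step(2) by blast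
  have "(\<Sum>l\<in>A. (if l = a then c else 0) *\<^sub>R h l) = c *\<^sub>R x"
    using a assms(1) by (simp add: if_distrib[of "\<lambda>r. r *\<^sub>R _"] cong: if_cong)
  then have "c *\<^sub>R x + y = (\<Sum>l\<in>A. (\<gamma> l + (if l = a then c else 0)) *\<^sub>R h l)"
    by (simp add: y scaleR_add_left sum.distrib)
  then show ?case by (rule exI[of _ "\<lambda>l. \<gamma> l + (if l = a then c else 0)"])
qed

lemma sum_atMost_head_tail: "(\<Sum>i\<le>(t::nat). F i) = F 0 + (\<Sum>i\<in>{1..t}. F i)"
proof -
  have "{..t} = insert 0 {1..t}" by auto
  then show ?thesis by simp
qed

lemma coeff_bound_by_residuals:
  fixes s :: "nat \<Rightarrow> 'b::euclidean_space" and \<gamma> :: "nat \<Rightarrow> real"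
  assumes "\<forall>j\<in>{1..t}. \<alpha> \<le> norm (s j - orth_proj (span (s ` {1..<j})) (s j))"
    and "\<forall>j\<in>{1..t}. norm (s j) \<le> \<beta>" and "0 < \<alpha>"
    and "norm (\<Sum>j\<in>{1..t}. \<gamma> j *\<^sub>R s j) \<le> B"
  shows "\<forall>j\<in>{1..t}. \<bar>\<gamma> j\<bar> \<le> B * (1 + \<beta> / \<alpha>) ^ (t - j) / \<alpha>"
  using assms
proof (induction t arbitrary: B)
  case 0
  then show ?case by simp
next
  case (Suc t)
  define S where "S = span (s ` {1..<Suc t})"
  have sub: "subspace S" unfolding S_def by simp
  define Q where "Q = (\<lambda>x. x - orth_proj S x)"
  have lQ: "linear Q"
    unfolding Q_def by (intro linear_compose_sub linear_ident linear_orth_proj[OF sub])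
  define v where "v = (\<Sum>j\<in>{1..t}. \<gamma> j *\<^sub>R s j)"
  have "v \<in> S" unfolding v_def S_def by (intro span_sum span_mul span_base) auto
  then have "Q v = 0" unfolding Q_def using orth_proj_self[OF sub] by simp
  moreover have split: "(\<Sum>j\<in>{1..Suc t}. \<gamma> j *\<^sub>R s j) = v + \<gamma> (Suc t) *\<^sub>R s (Suc t)"
    unfolding v_def by simp
  ultimately have Q_sum: "Q (\<Sum>j\<in>{1..Suc t}. \<gamma> j *\<^sub>R s j) = \<gamma> (Suc t) *\<^sub>R Q (s (Suc t))"
    using lQ by (simp add: linear_add linear_scale)
  \<comment> \<open>The part orthogonal to the earlier vectors isolates the last coefficient.\<close>
  have "\<bar>\<gamma> (Suc t)\<bar> * \<alpha> \<le> \<bar>\<gamma> (Suc t)\<bar> * norm (Q (s (Suc t)))"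
    using Suc.prems(1) unfolding Q_def S_def by (intro mult_left_mono) auto
  also have "\<dots> = norm (Q (\<Sum>j\<in>{1..Suc t}. \<gamma> j *\<^sub>R s j))" using Q_sum by simp
  also have "\<dots> \<le> B"
    unfolding Q_def by (rule order_trans[OF norm_diff_orth_proj_le[OF sub] Suc.prems(4)])
  finally have last: "\<bar>\<gamma> (Suc t)\<bar> \<le> B / \<alpha>" using Suc.prems(3) by (simp add: pos_le_divide_eq)
  have "norm v \<le> B + B / \<alpha> * \<beta>"
  proof -
    have "\<bar>\<gamma> (Suc t)\<bar> * norm (s (Suc t)) \<le> B / \<alpha> * \<beta>"
      using last Suc.prems(2) by (intro mult_mono) auto
    then show ?thesis
      using split norm_triangle_ineq4[of "\<Sum>j\<in>{1..Suc t}. \<gamma> j *\<^sub>R s j" "\<gamma> (Suc t) *\<^sub>R s (Suc t)"]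
        Suc.prems(4) by simp
  qed
  then have "norm v \<le> B * (1 + \<beta> / \<alpha>)" by (simp add: algebra_simps)
  then have IH: "\<forall>j\<in>{1..t}. \<bar>\<gamma> j\<bar> \<le> B * (1 + \<beta> / \<alpha>) * (1 + \<beta> / \<alpha>) ^ (t - j) / \<alpha>"
    using Suc.IH[of "B * (1 + \<beta> / \<alpha>)"] Suc.prems unfolding v_def by auto
  show ?case
  proof
    fix j assume j: "j \<in> {1..Suc t}"
    show "\<bar>\<gamma> j\<bar> \<le> B * (1 + \<beta> / \<alpha>) ^ (Suc t - j) / \<alpha>"
    proof (cases "j = Suc t")
      case True
      then show ?thesis using last by simp
    next
      case False
      then have "j \<in> {1..t}" "Suc t - j = Suc (t - j)" using j by auto
      then show ?thesis using IH by (simp add: mult.assoc)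
    qed
  qed
qed

definition coeff_const :: "nat \<Rightarrow> real" where
  "coeff_const t = 1 + 2 * real (t + 1) * 3 ^ t"

lemma coeff_const_ge_1: "1 \<le> coeff_const t"
  unfolding coeff_const_def by simp

lemma coeff_const_mono: "i \<le> j \<Longrightarrow> coeff_const i \<le> coeff_const j"
  unfolding coeff_const_def by (intro add_left_mono mult_mono) (auto intro: power_increasing)

lemma window_coeff_bound:
  fixes s :: "nat \<Rightarrow> 'b::euclidean_space" and c :: "nat \<Rightarrow> real"
  assumes X: "0 < X" "X < 1" and n: "0 < n"
    and resid: "\<forall>j\<in>{1..t}. X * n \<le> norm (s j - orth_proj (span (s ` {1..<j})) (s j))"
    and size: "\<forall>j\<in>{1..t}. norm (s j) \<le> 2 * n"
    and comb: "norm (\<Sum>j\<in>{1..t}. c j *\<^sub>R s j) \<le> 2 * n"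
    and sum1: "(\<Sum>i\<le>t. c i) = 1" and i: "i \<le> t"
  shows "\<bar>c i\<bar> \<le> coeff_const t * (1 + 1 / X ^ t)"
proof -
  define A where "A = 2 * 3 ^ t / X ^ t"
  have A0: "0 \<le> A" unfolding A_def using X by simp
  have Xn: "0 < X * n" using X n by simp
  have tail: "\<bar>c j\<bar> \<le> A" if j: "j \<in> {1..t}" for j
  proof -
    have "\<bar>c j\<bar> \<le> (2 * n) * (1 + (2 * n) / (X * n)) ^ (t - j) / (X * n)"
      using coeff_bound_by_residuals[OF resid size Xn comb] j by blast
    also have "\<dots> = 2 * (1 + 2 / X) ^ (t - j) / X" using n by simp
    also have "\<dots> \<le> 2 * (3 / X) ^ (t - j) / X"
    proof -
      have "1 + 2 / X \<le> 3 / X" using X by (simp add: field_simps)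
      then have "(1 + 2 / X) ^ (t - j) \<le> (3 / X) ^ (t - j)"
        using X by (intro power_mono) auto
      then show ?thesis using X by (simp add: divide_right_mono)
    qed
    also have "\<dots> = 2 * 3 ^ (t - j) / X ^ Suc (t - j)" by (simp add: power_divide)
    also have "\<dots> \<le> A" unfolding A_def
    proof (intro frac_le mult_left_mono)
      show "(3::real) ^ (t - j) \<le> 3 ^ t" by (rule power_increasing) auto
      show "X ^ t \<le> X ^ Suc (t - j)" using X j by (intro power_decreasing) auto
    qed (use X in auto)
    finally show ?thesis .
  qed
  have head: "\<bar>c 0\<bar> \<le> 1 + real t * A"
  proof -
    have "c 0 = 1 - (\<Sum>j\<in>{1..t}. c j)" using sum1 sum_atMost_head_tail[of c t] by simp
    then have "\<bar>c 0\<bar> \<le> 1 + \<bar>\<Sum>j\<in>{1..t}. c j\<bar>" by simp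
    also have "\<dots> \<le> 1 + (\<Sum>j\<in>{1..t}. \<bar>c j\<bar>)" by simp
    also have "(\<Sum>j\<in>{1..t}. \<bar>c j\<bar>) \<le> real (card {1..t}) * A"
      by (rule sum_bounded_above) (use tail in auto)
    finally show ?thesis by simp
  qed
  have "\<bar>c i\<bar> \<le> 1 + real (t + 1) * A"
  proof (cases "i = 0")
    case True
    then show ?thesis using head A0 by (simp add: distrib_right)
  next
    case False
    then have "\<bar>c i\<bar> \<le> A" using tail i by simp
    moreover have "A \<le> 1 + real (t + 1) * A" using A0 by (simp add: distrib_right)
    ultimately show ?thesis by linarith
  qed
  also have "\<dots> = 1 + (2 * real (t + 1) * 3 ^ t) * (1 / X ^ t)"
    unfolding A_def by simp
  also have "\<dots> \<le> (1 + 2 * real (t + 1) * 3 ^ t) * (1 + 1 / X ^ t)"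
  proof -
    have "0 \<le> 2 * real (t + 1) * 3 ^ t" "0 \<le> 1 / X ^ t" using X by auto
    then show ?thesis by (simp add: algebra_simps)
  qed
  finally show ?thesis unfolding coeff_const_def .
qed

lemma le_DIM_if_orth_residuals_pos:
  fixes s :: "nat \<Rightarrow> 'b::euclidean_space"
  assumes "\<forall>j\<in>{1..t}. 0 < norm (s j - orth_proj (span (s ` {1..<j})) (s j))"
  shows "t \<le> DIM('b)"
proof -
  have "dim (s ` {1..<Suc j}) = j" if "j \<le> t" for j
    using that
  proof (induction j)
    case 0
    show ?case by simp
  next
    case (Suc j)
    have "s (Suc j) \<notin> span (s ` {1..<Suc j})"
    proof
      assume "s (Suc j) \<in> span (s ` {1..<Suc j})"
      then have "orth_proj (span (s ` {1..<Suc j})) (s (Suc j)) = s (Suc j)"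
        by (rule orth_proj_self[OF subspace_span])
      then show False using assms Suc.prems by force
    qed
    moreover have "{1..<Suc (Suc j)} = insert (Suc j) {1..<Suc j}" by auto
    ultimately show ?case using Suc by (simp add: dim_insert)
  qed
  then show ?thesis using dim_subset_UNIV[of "s ` {1..<Suc t}"] by simp
qed

lemma affine_min_le_of_restart:
  fixes r :: "nat \<Rightarrow> 'b::euclidean_space"
  assumes min: "\<And>d. (\<Sum>i\<le>t. d i) = 1 \<Longrightarrow> norm w \<le> norm (\<Sum>i\<le>t. d i *\<^sub>R r i)"
    and restart: "norm ((r' - r 0) - orth_proj (span ((\<lambda>j. r j - r 0) ` {1..t})) (r' - r 0))
                    < \<tau> * norm (r' - r 0)"
    and "0 \<le> \<tau>"
  shows "norm w \<le> norm r' + \<tau> * (norm r' + norm (r 0))"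
proof -
  define s where "s = (\<lambda>j. r j - r 0)"
  define T where "T = span (s ` {1..t})"
  have sT: "subspace T" unfolding T_def by simp
  define P where "P = orth_proj T"
  have "P (r 0) \<in> T" unfolding P_def using orth_proj_in[OF sT] .
  then obtain \<gamma> where \<gamma>: "P (r 0) = (\<Sum>l\<in>{1..t}. \<gamma> l *\<^sub>R s l)"
    using mem_span_image_sum[of "{1..t}"] unfolding T_def by blast
  \<comment> \<open>The residual of r 0 after projection is itself an affine combination of the window.\<close>
  define d where "d = (\<lambda>i. if i = 0 then 1 + (\<Sum>l\<in>{1..t}. \<gamma> l) else - \<gamma> i)"
  have "(\<Sum>i\<le>t. d i) = 1"
    by (subst sum_atMost_head_tail) (simp add: d_def sum_negf)
  moreover have "(\<Sum>i\<le>t. d i *\<^sub>R r i) = r 0 - P (r 0)"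
    unfolding \<gamma> s_def
    by (subst sum_atMost_head_tail)
      (simp add: d_def sum_negf scaleR_diff_right sum_subtractf scaleR_sum_left algebra_simps)
  ultimately have "norm w \<le> norm (r 0 - P (r 0))" using min by metis
  also have "r 0 - P (r 0) = (r' - P r') - ((r' - r 0) - P (r' - r 0))"
    using linear_orth_proj[OF sT] unfolding P_def by (simp add: linear_diff algebra_simps)
  also have "norm \<dots> \<le> norm r' + \<tau> * (norm r' + norm (r 0))"
  proof -
    have "norm (r' - P r') \<le> norm r'"
      unfolding P_def by (rule norm_diff_orth_proj_le[OF sT])
    moreover have "\<tau> * norm (r' - r 0) \<le> \<tau> * (norm r' + norm (r 0))"
      using assms(3) norm_triangle_ineq4 by (intro mult_left_mono) auto
    ultimately show ?thesis
      using restart norm_triangle_ineq4[of "r' - P r'" "(r' - r 0) - P (r' - r 0)"]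
      unfolding P_def T_def s_def by linarith
  qed
  finally show ?thesis .
qed

section \<open>Submanifolds: tangent spaces and nearest points\<close>

lemma Ck_on_differentiable:
  assumes "Ck_on k S f" "0 < k" "x \<in> S"
  shows "f differentiable (at x)"
  using assms unfolding Ck_on_def
  by (metis empty_subsetI iter_pderiv.simps(1) list.size(3) set_empty)

lemma smooth_on_differentiable:
  assumes "smooth_on S f" "x \<in> S"
  shows "f differentiable (at x)"
  using assms Ck_on_differentiable[of 1 S f x] unfolding smooth_on_def by auto

lemma Ck_on_bounded_linear_derivative:
  assumes "Ck_on k S f" "0 < k" "x \<in> S"
  shows "bounded_linear (frechet_derivative f (at x))"
  using Ck_on_differentiable[OF assms] by (auto intro: has_derivative_bounded_linear
      simp: frechet_derivative_works)

lemma curve_stays_in_open: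
  assumes "(\<gamma> has_vector_derivative v) (at 0)" "open W" "\<gamma> 0 \<in> W"
  shows "\<exists>d>0. \<forall>t. \<bar>t\<bar> < d \<longrightarrow> \<gamma> t \<in> W"
proof -
  have "isCont \<gamma> 0" using has_vector_derivative_continuous[OF assms(1)] by simp
  then have "eventually (\<lambda>t. \<gamma> t \<in> W) (at 0)"
    using assms(2,3) unfolding isCont_def by (simp add: topological_tendstoD)
  then obtain d where "d > 0" "\<And>t. t \<noteq> 0 \<and> dist t 0 < d \<Longrightarrow> \<gamma> t \<in> W"
    unfolding eventually_at by auto
  then show ?thesis using assms(3) by (metis dist_real_def diff_zero)
qed

lemma zero_in_tangent_space:
  assumes "x \<in> \<Sigma>"
  shows "0 \<in> tangent_space \<Sigma> x"
  unfolding tangent_space_def using assms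
  by (intro CollectI exI[of _ "\<lambda>t. x"] exI[of _ 1] conjI) (simp_all add: has_vector_derivative_def)

lemma tangent_space_scaleR:
  assumes "x \<in> \<Sigma>" "v \<in> tangent_space \<Sigma> x"
  shows "c *\<^sub>R v \<in> tangent_space \<Sigma> x"
proof (cases "c = 0")
  case True
  then show ?thesis using zero_in_tangent_space[OF assms(1)] by simp
next
  case False
  obtain \<gamma> e where \<gamma>: "e > 0" "\<gamma> 0 = x" "\<forall>t. \<bar>t\<bar> < e \<longrightarrow> \<gamma> t \<in> \<Sigma>"
    "(\<gamma> has_vector_derivative v) (at 0)"
    using assms(2) unfolding tangent_space_def by blast
  have "((\<lambda>t. c * t) has_derivative (\<lambda>t. c * t)) (at 0)"
    by (auto intro!: derivative_eq_intros)
  from has_derivative_compose[OF this, of \<gamma> "\<lambda>t. t *\<^sub>R v"]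
  have "((\<lambda>t. \<gamma> (c * t)) has_vector_derivative (c *\<^sub>R v)) (at 0)"
    using \<gamma>(4) by (simp add: has_vector_derivative_def mult.commute)
  moreover have "\<gamma> (c * t) \<in> \<Sigma>" if "\<bar>t\<bar> < e / \<bar>c\<bar>" for t
    using \<gamma>(3) that False by (simp add: abs_mult pos_less_divide_eq mult.commute)
  ultimately show ?thesis
    unfolding tangent_space_def using \<gamma> False
    by (intro CollectI exI[of _ "\<lambda>t. \<gamma> (c * t)"] exI[of _ "e / \<bar>c\<bar>"] conjI) simp_all
qed

text \<open>In a chart \<psi> straightening \<Sigma> onto a linear subspace L, two curves are added in chart
  coordinates and mapped back; the chain rule gives velocity v + w.\<close>

lemma tangent_space_add_in_chart:
  fixes \<psi> \<psi>' :: "'a::euclidean_space \<Rightarrow> 'a"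
  assumes W: "open W" "x \<in> W" "\<forall>y\<in>W. \<psi>' (\<psi> y) = y"
    and W': "open W'" "\<psi> x \<in> W'"
    and L: "subspace L" "\<psi> ` (\<Sigma> \<inter> W) = W' \<inter> L"
    and D: "(\<psi> has_derivative D) (at x)" and D': "(\<psi>' has_derivative D') (at (\<psi> x))"
    and x: "x \<in> \<Sigma>"
    and v: "v \<in> tangent_space \<Sigma> x" and w: "w \<in> tangent_space \<Sigma> x"
  shows "v + w \<in> tangent_space \<Sigma> x"
proof -
  have "((\<lambda>y. \<psi>' (\<psi> y)) has_derivative (\<lambda>h. D' (D h))) (at x)"
    using has_derivative_compose[OF D D'] by simp
  moreover have "((\<lambda>y. \<psi>' (\<psi> y)) has_derivative (\<lambda>h. h)) (at x)"
    by (rule has_derivative_transform_within_open[OF has_derivative_ident W(1,2)]) (use W(3) in simp)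
  ultimately have inverse: "\<And>h. D' (D h) = h"
    using has_derivative_unique by metis
  have lD: "linear D" using D has_derivative_linear by blast
  obtain \<gamma>1 e1 where \<gamma>1: "e1 > 0" "\<gamma>1 0 = x" "\<forall>t. \<bar>t\<bar> < e1 \<longrightarrow> \<gamma>1 t \<in> \<Sigma>"
    "(\<gamma>1 has_vector_derivative v) (at 0)"
    using v unfolding tangent_space_def by blast
  obtain \<gamma>2 e2 where \<gamma>2: "e2 > 0" "\<gamma>2 0 = x" "\<forall>t. \<bar>t\<bar> < e2 \<longrightarrow> \<gamma>2 t \<in> \<Sigma>"
    "(\<gamma>2 has_vector_derivative w) (at 0)"
    using w unfolding tangent_space_def by blast
  define \<eta> where "\<eta> = (\<lambda>t. \<psi> (\<gamma>1 t) + \<psi> (\<gamma>2 t) - \<psi> x)"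
  have \<eta>0: "\<eta> 0 = \<psi> x" unfolding \<eta>_def using \<gamma>1(2) \<gamma>2(2) by simp
  have "(\<eta> has_derivative (\<lambda>t. D (t *\<^sub>R v) + D (t *\<^sub>R w))) (at 0)"
    unfolding \<eta>_def using \<gamma>1(2,4) \<gamma>2(2,4) D
    by (auto intro!: derivative_eq_intros has_derivative_compose[of _ _ _ _ \<psi>]
        simp: has_vector_derivative_def)
  then have d\<eta>: "(\<eta> has_derivative (\<lambda>t. t *\<^sub>R (D v + D w))) (at 0)"
    using lD by (simp add: linear_scale scaleR_add_right)
  then have "((\<lambda>t. \<psi>' (\<eta> t)) has_derivative (\<lambda>t. D' (t *\<^sub>R (D v + D w)))) (at 0)"
    using has_derivative_compose[OF d\<eta>] D' \<eta>0 by simp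
  moreover have "D' (t *\<^sub>R (D v + D w)) = t *\<^sub>R (v + w)" for t
    using lD inverse by (metis linear_add linear_scale)
  ultimately have velocity: "((\<lambda>t. \<psi>' (\<eta> t)) has_vector_derivative (v + w)) (at 0)"
    by (simp add: has_vector_derivative_def)
  obtain a1 where a1: "a1 > 0" "\<forall>t. \<bar>t\<bar> < a1 \<longrightarrow> \<gamma>1 t \<in> W"
    using curve_stays_in_open[OF \<gamma>1(4) W(1)] \<gamma>1(2) W(2) by auto
  obtain a2 where a2: "a2 > 0" "\<forall>t. \<bar>t\<bar> < a2 \<longrightarrow> \<gamma>2 t \<in> W"
    using curve_stays_in_open[OF \<gamma>2(4) W(1)] \<gamma>2(2) W(2) by auto
  obtain a3 where a3: "a3 > 0" "\<forall>t. \<bar>t\<bar> < a3 \<longrightarrow> \<eta> t \<in> W'"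
    using curve_stays_in_open[OF _ W'(1), of \<eta>] d\<eta> \<eta>0 W'(2)
    by (auto simp: has_vector_derivative_def)
  define e where "e = Min {e1, e2, a1, a2, a3}"
  have "\<psi>' (\<eta> t) \<in> \<Sigma>" if t: "\<bar>t\<bar> < e" for t
  proof -
    have "\<gamma>1 t \<in> \<Sigma> \<inter> W" "\<gamma>2 t \<in> \<Sigma> \<inter> W" "\<eta> t \<in> W'"
      using t \<gamma>1(3) \<gamma>2(3) a1(2) a2(2) a3(2) unfolding e_def by auto
    moreover have "\<psi> x \<in> L" using L(2) x W(2) by blast
    ultimately have "\<eta> t \<in> W' \<inter> L"
      using L unfolding \<eta>_def by (blast intro: subspace_add subspace_diff)
    then obtain y where "y \<in> \<Sigma> \<inter> W" "\<eta> t = \<psi> y" using L(2) by (metis imageE)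
    then show ?thesis using W(3) by auto
  qed
  moreover have "e > 0" unfolding e_def using \<gamma>1(1) \<gamma>2(1) a1(1) a2(1) a3(1) by simp
  moreover have "\<psi>' (\<eta> 0) = x" using \<eta>0 W(2,3) by simp
  ultimately show ?thesis
    unfolding tangent_space_def using velocity
    by (intro CollectI exI[of _ "\<lambda>t. \<psi>' (\<eta> t)"] exI[of _ e] conjI) simp_all
qed

lemma subspace_tangent_space:
  fixes \<Sigma> :: "'a::euclidean_space set"
  assumes "smooth_submanifold \<Sigma>" "x \<in> \<Sigma>"
  shows "subspace (tangent_space \<Sigma> x)"
proof -
  obtain W W' L and \<psi> \<psi>' :: "'a \<Rightarrow> 'a" where
    chart: "open W" "x \<in> W" "open W'" "smooth_on W \<psi>" "smooth_on W' \<psi>'"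
      "\<psi> ` W = W'" "\<forall>y\<in>W. \<psi>' (\<psi> y) = y" "subspace L" "\<psi> ` (\<Sigma> \<inter> W) = W' \<inter> L"
    using assms unfolding smooth_submanifold_def by metis
  have \<psi>x: "\<psi> x \<in> W'" using chart(2,6) by blast
  have "(\<psi> has_derivative frechet_derivative \<psi> (at x)) (at x)"
    using smooth_on_differentiable[OF chart(4,2)] by (simp add: frechet_derivative_works)
  moreover have "(\<psi>' has_derivative frechet_derivative \<psi>' (at (\<psi> x))) (at (\<psi> x))"
    using smooth_on_differentiable[OF chart(5) \<psi>x] by (simp add: frechet_derivative_works)
  ultimately show ?thesis
    unfolding subspace_def
    using zero_in_tangent_space[OF assms(2)] tangent_space_scaleR[OF assms(2)]
      tangent_space_add_in_chart[OF chart(1,2,7,3) \<psi>x chart(8,9) _ _ assms(2)]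
    by blast
qed

lemma nearest_proj_in:
  assumes "\<exists>!y. y \<in> S \<and> (\<forall>z\<in>S. dist x y \<le> dist x z)"
  shows "nearest_proj S x \<in> S"
  using theI'[OF assms] unfolding nearest_proj_def by blast

lemma nearest_proj_self:
  assumes "x \<in> S"
  shows "nearest_proj S x = x"
  unfolding nearest_proj_def by (rule the_equality) (use assms in auto)

section \<open>One-step estimates\<close>

lemma norm_sum_scaleR_le:
  fixes v :: "nat \<Rightarrow> 'a::real_normed_vector"
  assumes "\<forall>i\<le>t. norm (v i) \<le> B" "(\<Sum>i\<le>t. \<bar>c i\<bar>) \<le> S" "0 \<le> B"
  shows "norm (\<Sum>i\<le>t. c i *\<^sub>R v i) \<le> S * B"
proof -
  have "norm (\<Sum>i\<le>t. c i *\<^sub>R v i) \<le> (\<Sum>i\<le>t. \<bar>c i\<bar> * B)"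
    using assms(1) by (intro order_trans[OF norm_sum] sum_mono) (auto intro: mult_left_mono)
  also have "\<dots> = (\<Sum>i\<le>t. \<bar>c i\<bar>) * B" by (simp add: sum_distrib_right)
  also have "\<dots> \<le> S * B" using assms(2,3) by (rule mult_right_mono)
  finally show ?thesis .
qed

lemma one_le_sum_abs:
  assumes "(\<Sum>i\<le>t. c i) = (1::real)" "(\<Sum>i\<le>t. \<bar>c i\<bar>) \<le> S"
  shows "1 \<le> S"
  using sum_abs[of c "{..t}"] assms by simp

lemma affine_comb_diff:
  fixes x :: "nat \<Rightarrow> 'a::real_vector"
  assumes "(\<Sum>i\<le>t. c i) = 1"
  shows "(\<Sum>i\<le>t. c i *\<^sub>R x i) - a = (\<Sum>i\<le>t. c i *\<^sub>R (x i - a))"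
proof -
  have "(\<Sum>i\<le>t. c i *\<^sub>R a) = a" using assms by (simp add: scaleR_sum_left[symmetric])
  then show ?thesis by (simp add: scaleR_diff_right sum_subtractf)
qed

lemma norm_affine_comb_diff_le:
  fixes x :: "nat \<Rightarrow> 'a::real_normed_vector"
  assumes "\<forall>i\<le>t. norm (x i - a) \<le> \<epsilon>" "(\<Sum>i\<le>t. c i) = 1" "(\<Sum>i\<le>t. \<bar>c i\<bar>) \<le> S" "0 \<le> \<epsilon>"
  shows "norm ((\<Sum>i\<le>t. c i *\<^sub>R x i) - a) \<le> S * \<epsilon>"
  unfolding affine_comb_diff[OF assms(2)] using assms by (intro norm_sum_scaleR_le) auto

lemma map_affine_comb_error:
  fixes F :: "'a::real_normed_vector \<Rightarrow> 'b::real_normed_vector" and x :: "nat \<Rightarrow> 'a"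
  assumes "linear D" "0 \<le> C"
    and taylor: "\<And>x. x \<in> U \<Longrightarrow> norm (F x - b - D (x - a)) \<le> C / 2 * (norm (x - a))\<^sup>2"
    and x: "\<forall>i\<le>t. x i \<in> U \<and> norm (x i - a) \<le> \<epsilon>" and "0 \<le> \<epsilon>"
    and c: "(\<Sum>i\<le>t. c i) = 1" "(\<Sum>i\<le>t. \<bar>c i\<bar>) \<le> S"
    and y: "(\<Sum>i\<le>t. c i *\<^sub>R x i) \<in> U"
  shows "norm (F (\<Sum>i\<le>t. c i *\<^sub>R x i) - (\<Sum>i\<le>t. c i *\<^sub>R F (x i))) \<le> C * S\<^sup>2 * \<epsilon>\<^sup>2"
proof -
  define y where "y = (\<Sum>i\<le>t. c i *\<^sub>R x i)"
  define e where "e = (\<lambda>z. F z - b - D (z - a))"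
  have S1: "1 \<le> S" using one_le_sum_abs[OF c] .
  have "norm (y - a) \<le> S * \<epsilon>"
    unfolding y_def using x by (intro norm_affine_comb_diff_le[OF _ c assms(5)]) auto
  from power_mono[OF this norm_ge_zero, of 2]
  have "(norm (y - a))\<^sup>2 \<le> S\<^sup>2 * \<epsilon>\<^sup>2" by (simp add: power_mult_distrib)
  then have ey: "norm (e y) \<le> C / 2 * (S\<^sup>2 * \<epsilon>\<^sup>2)"
    unfolding e_def y_def using taylor[OF y] assms(2)
      by (meson mult_left_mono order_trans zero_le_divide_iff zero_le_numeral)
  have ex: "norm (e (x i)) \<le> C / 2 * \<epsilon>\<^sup>2" if "i \<le> t" for i
  proof -
    have "(norm (x i - a))\<^sup>2 \<le> \<epsilon>\<^sup>2" using x that by (simp add: power_mono)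
    then show ?thesis
      unfolding e_def using taylor[of "x i"] x that assms(2)
        by (meson mult_left_mono order_trans zero_le_divide_iff zero_le_numeral)
  qed
  \<comment> \<open>Both the constant b and the linear part cancel because the weights sum to one.\<close>
  have "F y - (\<Sum>i\<le>t. c i *\<^sub>R F (x i)) = e y - (\<Sum>i\<le>t. c i *\<^sub>R e (x i))"
  proof -
    have "D (y - a) = (\<Sum>i\<le>t. c i *\<^sub>R D (x i - a))"
      unfolding y_def affine_comb_diff[OF c(1)] using assms(1)
        by (simp add: linear_sum linear_scale)
    moreover have "(\<Sum>i\<le>t. c i *\<^sub>R b) = b" using c(1) by (simp add: scaleR_sum_left[symmetric])
    ultimately show ?thesis
      unfolding e_def by (simp add: scaleR_diff_right sum_subtractf sum.distrib algebra_simps)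
  qed
  also have "norm \<dots> \<le> C / 2 * (S\<^sup>2 * \<epsilon>\<^sup>2) + S * (C / 2 * \<epsilon>\<^sup>2)"
    using ey norm_sum_scaleR_le[of t "\<lambda>i. e (x i)" "C / 2 * \<epsilon>\<^sup>2" c S] ex c(2) assms(2)
      norm_triangle_ineq4[of "e y" "\<Sum>i\<le>t. c i *\<^sub>R e (x i)"]
    by simp
  also have "\<dots> \<le> C * S\<^sup>2 * \<epsilon>\<^sup>2"
  proof -
    have "S * \<epsilon>\<^sup>2 \<le> S\<^sup>2 * \<epsilon>\<^sup>2" using S1 by (simp add: power2_eq_square mult_right_mono)
    then show ?thesis using assms(2) mult_left_mono[of "S * \<epsilon>\<^sup>2" "S\<^sup>2 * \<epsilon>\<^sup>2" "C / 2"]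
      by (simp add: algebra_simps)
  qed
  finally show ?thesis unfolding y_def .
qed

lemma norm_diff_le_of_taylor:
  fixes F :: "'a::real_normed_vector \<Rightarrow> 'b::real_normed_vector"
  assumes "norm (F x - b - D (x - a)) \<le> C / 2 * (norm (x - a))\<^sup>2"
    and "\<forall>h. norm (D h) \<le> nD * norm h" "0 \<le> nD" "0 \<le> C"
    and "norm (x - a) \<le> e" "C * e \<le> 2"
  shows "norm (F x - b) \<le> (nD + 1) * e"
proof -
  have "C * norm (x - a) \<le> C * e" by (rule mult_left_mono[OF assms(5,4)])
  then have "C * norm (x - a) \<le> 2" using assms(6) by linarith
  then have "C / 2 * (norm (x - a))\<^sup>2 \<le> norm (x - a)"
    using mult_right_mono[of "(C * norm (x - a)) / 2" 1 "norm (x - a)"] by (simp add: power2_eq_square)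
  then have "norm (F x - b - D (x - a)) \<le> norm (x - a)" using assms(1) by linarith
  moreover have "norm (F x - b) \<le> norm (F x - b - D (x - a)) + norm (D (x - a))"
    using norm_triangle_ineq[of "F x - b - D (x - a)" "D (x - a)"] by simp
  moreover have "nD * norm (x - a) \<le> nD * e" by (rule mult_left_mono[OF assms(5,3)])
  moreover have "(nD + 1) * e = nD * e + e" by (simp add: algebra_simps)
  ultimately show ?thesis using assms(2)[rule_format, of "x - a"] assms(5) by linarith
qed

definition AP_next :: "('a::real_vector \<Rightarrow> 'a) \<Rightarrow> bool \<Rightarrow> nat \<Rightarrow> (nat \<Rightarrow> real) \<Rightarrow> (nat \<Rightarrow> 'a) \<Rightarrow> 'a" where
  "AP_next g vA t c x = (if vA then (\<Sum>i\<le>t. c i *\<^sub>R g (x i)) else g (\<Sum>i\<le>t. c i *\<^sub>R x i))"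

text \<open>The convergence analysis uses f, g and \<Sigma> only through this one-step estimate.\<close>

definition AP_step_bound :: "('a::real_normed_vector \<Rightarrow> 'b::real_normed_vector) \<Rightarrow> ('a \<Rightarrow> 'a) \<Rightarrow>
    'a set \<Rightarrow> 'a set \<Rightarrow> 'a \<Rightarrow> real \<Rightarrow> bool \<Rightarrow> real \<Rightarrow> real \<Rightarrow> bool" where
  "AP_step_bound f g \<Sigma> V xs K vA \<rho> G \<longleftrightarrow>
     (\<forall>x c t \<epsilon> S. (\<forall>i\<le>t. x i \<in> \<Sigma> \<and> norm (x i - xs) \<le> \<epsilon>) \<longrightarrow> (\<Sum>i\<le>t. c i) = 1 \<longrightarrow>
        (\<Sum>i\<le>t. \<bar>c i\<bar>) \<le> S \<longrightarrow> 0 \<le> \<epsilon> \<longrightarrow> S * \<epsilon> \<le> \<rho> \<longrightarrow>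
        (\<Sum>i\<le>t. c i *\<^sub>R x i) \<in> V \<and> AP_next g vA t c x \<in> \<Sigma> \<inter> V \<and>
        norm (f (AP_next g vA t c x)) \<le> K * norm (\<Sum>i\<le>t. c i *\<^sub>R f (x i)) + G * S\<^sup>2 * \<epsilon>\<^sup>2)"

lemma AP_step_boundD:
  assumes "AP_step_bound f g \<Sigma> V xs K vA \<rho> G"
    and "\<And>i. i \<le> t \<Longrightarrow> x i \<in> \<Sigma> \<and> norm (x i - xs) \<le> \<epsilon>" "(\<Sum>i\<le>t. c i) = 1"
      "(\<Sum>i\<le>t. \<bar>c i\<bar>) \<le> S" "0 \<le> \<epsilon>" "S * \<epsilon> \<le> \<rho>"
  shows "(\<Sum>i\<le>t. c i *\<^sub>R x i) \<in> V" "AP_next g vA t c x \<in> \<Sigma>" "AP_next g vA t c x \<in> V"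
    "norm (f (AP_next g vA t c x)) \<le> K * norm (\<Sum>i\<le>t. c i *\<^sub>R f (x i)) + G * S\<^sup>2 * \<epsilon>\<^sup>2"
  using assms unfolding AP_step_bound_def by blast+

text \<open>Version P: the combination y leaves \<Sigma> only to second order, so replacing it by its
  nearest point P y costs a second-order term through the Lipschitz bounds of f and f \<circ> g.\<close>

lemma AP_step_P:
  fixes f :: "'a::real_normed_vector \<Rightarrow> 'b::real_normed_vector" and xx :: "nat \<Rightarrow> 'a"
  assumes "linear D" "linear Q" and nonneg: "0 \<le> K" "0 \<le> L" "0 \<le> M" "0 \<le> A1" "0 \<le> A2"
    and f_taylor: "\<forall>x\<in>U. norm (f x - D (x - xs)) \<le> L / 2 * (norm (x - xs))\<^sup>2"
    and P_taylor: "\<forall>x\<in>U. norm (P x - (xs + Q (x - xs))) \<le> M / 2 * (norm (x - xs))\<^sup>2"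
    and P: "\<forall>x\<in>U. P x \<in> U \<and> P x \<in> \<Sigma> \<and> (x \<in> \<Sigma> \<longrightarrow> P x = x)"
    and f_lip: "\<forall>x\<in>U. \<forall>y\<in>U. norm (f x - f y) \<le> A1 * norm (x - y)"
    and fg_lip: "\<forall>x\<in>U. \<forall>y\<in>U. norm (f (g x) - f (g y)) \<le> A2 * norm (x - y)"
    and contr: "\<forall>x\<in>U. x \<in> \<Sigma> \<longrightarrow> norm (f (g x)) \<le> K * norm (f x)"
    and xx: "\<forall>i\<le>t. xx i \<in> U \<and> xx i \<in> \<Sigma> \<and> norm (xx i - xs) \<le> \<epsilon>" "0 \<le> \<epsilon>"
    and c: "(\<Sum>i\<le>t. c i) = 1" "(\<Sum>i\<le>t. \<bar>c i\<bar>) \<le> S"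
    and y: "(\<Sum>i\<le>t. c i *\<^sub>R xx i) \<in> U"
  shows "norm (f (g (\<Sum>i\<le>t. c i *\<^sub>R xx i)))
           \<le> K * norm (\<Sum>i\<le>t. c i *\<^sub>R f (xx i)) + (K * L + (A2 + K * A1) * M) * S\<^sup>2 * \<epsilon>\<^sup>2"
proof -
  define y where "y = (\<Sum>i\<le>t. c i *\<^sub>R xx i)"
  define E where "E = S\<^sup>2 * \<epsilon>\<^sup>2"
  have xxU: "\<forall>i\<le>t. xx i \<in> U \<and> norm (xx i - xs) \<le> \<epsilon>" using xx by auto
  have "\<And>x. x \<in> U \<Longrightarrow> norm (f x - 0 - D (x - xs)) \<le> L / 2 * (norm (x - xs))\<^sup>2"
    using f_taylor by simp
  from map_affine_comb_error[OF assms(1) nonneg(2) this xxU xx(2) c y]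
  have fy: "norm (f y - (\<Sum>i\<le>t. c i *\<^sub>R f (xx i))) \<le> L * E"
    unfolding y_def E_def by (simp add: mult.assoc)
  \<comment> \<open>x \<mapsto> x - P x has linear part id - Q at xs and vanishes on \<Sigma>.\<close>
  have "norm (y - P y - (\<Sum>i\<le>t. c i *\<^sub>R (xx i - P (xx i)))) \<le> M * S\<^sup>2 * \<epsilon>\<^sup>2"
    unfolding y_def
  proof (rule map_affine_comb_error[where F="\<lambda>x. x - P x" and D="\<lambda>h. h - Q h" and b=0,
        OF _ nonneg(3) _ xxU xx(2) c y])
    show "linear (\<lambda>h. h - Q h)" using assms(2) by (intro linear_compose_sub linear_ident)
    show "norm (x - P x - 0 - (x - xs - Q (x - xs))) \<le> M / 2 * (norm (x - xs))\<^sup>2" if "x \<in> U" for x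
      using P_taylor that by (simp add: norm_minus_commute algebra_simps)
  qed
  moreover have "xx i - P (xx i) = 0" if "i \<le> t" for i using P xx that by auto
  ultimately have dP: "norm (y - P y) \<le> M * E" unfolding y_def E_def by (simp add: mult.assoc)
  have PyU: "P y \<in> U" "P y \<in> \<Sigma>" using P y unfolding y_def by auto
  have "norm (f (g y)) \<le> norm (f (g (P y))) + A2 * norm (y - P y)"
    using fg_lip y PyU(1) norm_triangle_ineq2[of "f (g y)" "f (g (P y))"] unfolding y_def
      by fastforce
  also have "\<dots> \<le> K * norm (f (P y)) + A2 * norm (y - P y)"
    using contr PyU by simp
  also have "\<dots> \<le> K * (norm (f y) + A1 * norm (y - P y)) + A2 * norm (y - P y)"
  proof -
    have "norm (f (P y)) \<le> norm (f y) + A1 * norm (y - P y)"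
      using f_lip y PyU(1) norm_triangle_ineq2[of "f (P y)" "f y"] unfolding y_def
      by (fastforce simp: norm_minus_commute)
    then show ?thesis using nonneg(1) by (simp add: mult_left_mono)
  qed
  also have "\<dots> \<le> K * (norm (\<Sum>i\<le>t. c i *\<^sub>R f (xx i)) + L * E + A1 * (M * E)) + A2 * (M * E)"
  proof -
    have "norm (f y) \<le> norm (\<Sum>i\<le>t. c i *\<^sub>R f (xx i)) + L * E"
      using fy norm_triangle_ineq2[of "f y" "\<Sum>i\<le>t. c i *\<^sub>R f (xx i)"] by linarith
    then show ?thesis
      using dP nonneg by (intro add_mono mult_left_mono) auto
  qed
  also have "\<dots> = K * norm (\<Sum>i\<le>t. c i *\<^sub>R f (xx i)) + (K * L + (A2 + K * A1) * M) * E"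
    by (simp add: algebra_simps)
  finally show ?thesis unfolding y_def E_def by (simp add: mult.assoc)
qed

lemma AP_step_A:
  fixes f :: "'a::real_normed_vector \<Rightarrow> 'b::real_normed_vector" and xx :: "nat \<Rightarrow> 'a"
  assumes "linear D" "linear E" and nonneg: "0 \<le> K" "0 \<le> L" "0 \<le> L'" "0 \<le> A1"
    and f_taylor: "\<forall>x\<in>U. norm (f x - D (x - xs)) \<le> L / 2 * (norm (x - xs))\<^sup>2"
    and g_taylor: "\<forall>x\<in>U. norm (g x - xs - E (x - xs)) \<le> L' / 2 * (norm (x - xs))\<^sup>2"
    and f_lip: "\<forall>x\<in>U. \<forall>y\<in>U. norm (f x - f y) \<le> A1 * norm (x - y)"
    and contr: "\<forall>x\<in>U. norm (f (g x)) \<le> K * norm (f x)"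
    and xx: "\<forall>i\<le>t. xx i \<in> U \<and> norm (xx i - xs) \<le> \<epsilon>" "0 \<le> \<epsilon>"
    and c: "(\<Sum>i\<le>t. c i) = 1" "(\<Sum>i\<le>t. \<bar>c i\<bar>) \<le> S"
    and y: "(\<Sum>i\<le>t. c i *\<^sub>R xx i) \<in> U" and gy: "g (\<Sum>i\<le>t. c i *\<^sub>R xx i) \<in> U"
    and z: "(\<Sum>i\<le>t. c i *\<^sub>R g (xx i)) \<in> U"
  shows "norm (f (\<Sum>i\<le>t. c i *\<^sub>R g (xx i)))
           \<le> K * norm (\<Sum>i\<le>t. c i *\<^sub>R f (xx i)) + (K * L + A1 * L') * S\<^sup>2 * \<epsilon>\<^sup>2"
proof -
  define y where "y = (\<Sum>i\<le>t. c i *\<^sub>R xx i)"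
  define z where "z = (\<Sum>i\<le>t. c i *\<^sub>R g (xx i))"
  define E where "E = S\<^sup>2 * \<epsilon>\<^sup>2"
  have "\<And>x. x \<in> U \<Longrightarrow> norm (f x - 0 - D (x - xs)) \<le> L / 2 * (norm (x - xs))\<^sup>2"
    using f_taylor by simp
  from map_affine_comb_error[OF assms(1) nonneg(2) this xx c y]
  have fy: "norm (f y - (\<Sum>i\<le>t. c i *\<^sub>R f (xx i))) \<le> L * E"
    unfolding y_def E_def by (simp add: mult.assoc)
  from map_affine_comb_error[OF assms(2) nonneg(3) g_taylor[rule_format] xx c y]
  have "norm (g y - z) \<le> L' * E"
    unfolding y_def z_def E_def by (simp add: mult.assoc)
  then have "A1 * norm (z - g y) \<le> A1 * (L' * E)"
    using nonneg(4) by (simp add: norm_minus_commute mult_left_mono)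
  moreover have "norm (f z) \<le> norm (f (g y)) + A1 * norm (z - g y)"
    using f_lip z gy norm_triangle_ineq2[of "f z" "f (g y)"] unfolding y_def z_def by fastforce
  moreover have "norm (f (g y)) \<le> K * (norm (\<Sum>i\<le>t. c i *\<^sub>R f (xx i)) + L * E)"
  proof -
    have "norm (f y) \<le> norm (\<Sum>i\<le>t. c i *\<^sub>R f (xx i)) + L * E"
      using fy norm_triangle_ineq2[of "f y" "\<Sum>i\<le>t. c i *\<^sub>R f (xx i)"] by linarith
    then show ?thesis using contr y nonneg(1) unfolding y_def by (meson mult_left_mono order_trans)
  qed
  ultimately have "norm (f z) \<le> K * (norm (\<Sum>i\<le>t. c i *\<^sub>R f (xx i)) + L * E) + A1 * (L' * E)"
    by linarith
  then show ?thesis unfolding z_def E_def by (simp add: algebra_simps)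
qed

lemma AP_step_estimate:
  fixes f :: "'a::real_normed_vector \<Rightarrow> 'b::real_normed_vector"
  assumes U: "open U" "xs \<in> U" "\<And>x. x \<in> U \<Longrightarrow> x \<in> V \<and> g x \<in> V" and g_into: "g ` V \<subseteq> \<Sigma>"
    and contr: "0 \<le> K" "\<And>x. x \<in> U \<Longrightarrow> x \<in> \<Sigma> \<Longrightarrow> norm (f (g x)) \<le> K * norm (f x)"
    and f_lip: "0 \<le> A1" "\<And>x y. x \<in> U \<Longrightarrow> y \<in> U \<Longrightarrow> norm (f x - f y) \<le> A1 * norm (x - y)"
    and fg_lip: "0 \<le> A2" "\<And>x y. x \<in> U \<Longrightarrow> y \<in> U \<Longrightarrow> norm (f (g x) - f (g y)) \<le> A2 * norm (x - y)"
    and f_taylor: "linear D" "0 \<le> L" "\<forall>x\<in>U. norm (f x - D (x - xs)) \<le> L / 2 * (norm (x - xs))\<^sup>2"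
    and g_taylor: "bounded_linear E" "0 \<le> L'"
      "\<forall>x\<in>U. norm (g x - xs - E (x - xs)) \<le> L' / 2 * (norm (x - xs))\<^sup>2"
    and P: "\<forall>x\<in>U. P x \<in> U \<and> P x \<in> \<Sigma> \<and> (x \<in> \<Sigma> \<longrightarrow> P x = x)"
    and P_taylor: "linear Q" "0 \<le> M" "\<forall>x\<in>U. norm (P x - (xs + Q (x - xs))) \<le> M / 2 * (norm (x - xs))\<^sup>2"
    and version_A: "vA \<longrightarrow> \<Sigma> = UNIV"
  shows "\<exists>\<rho>>0. \<exists>G\<ge>0. AP_step_bound f g \<Sigma> V xs K vA \<rho> G"
proof -
  obtain \<delta> where \<delta>: "0 < \<delta>" "ball xs \<delta> \<subseteq> U" using U(1,2) open_contains_ball by blast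
  obtain nE where nE: "0 < nE" "\<forall>h. norm (E h) \<le> nE * norm h"
    using bounded_linear.pos_bounded[OF g_taylor(1)] by (auto simp: mult.commute)
  define \<rho> where "\<rho> = min (\<delta> / (2 * (nE + 1))) (1 / (L' + 1))"
  define GP where "GP = K * L + (A2 + K * A1) * M"
  define GA where "GA = K * L + A1 * L'"
  have "AP_step_bound f g \<Sigma> V xs K vA \<rho> (GP + GA)"
    unfolding AP_step_bound_def
  proof (intro allI impI)
    fix xx :: "nat \<Rightarrow> 'a" and c :: "nat \<Rightarrow> real" and t :: nat and \<epsilon> S :: real
    assume xx: "\<forall>i\<le>t. xx i \<in> \<Sigma> \<and> norm (xx i - xs) \<le> \<epsilon>"
      and c: "(\<Sum>i\<le>t. c i) = 1" "(\<Sum>i\<le>t. \<bar>c i\<bar>) \<le> S" and \<epsilon>: "0 \<le> \<epsilon>" and S\<epsilon>: "S * \<epsilon> \<le> \<rho>"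
    define y where "y = (\<Sum>i\<le>t. c i *\<^sub>R xx i)"
    have S1: "1 \<le> S" using one_le_sum_abs[OF c] .
    have \<epsilon>_le: "\<epsilon> \<le> S * \<epsilon>" "S * \<epsilon> \<le> (nE + 1) * (S * \<epsilon>)"
      using S1 \<epsilon> nE(1) by (auto simp: mult_le_cancel_right1 mult_le_cancel_right2 algebra_simps)
    have "(nE + 1) * (S * \<epsilon>) \<le> (nE + 1) * (\<delta> / (2 * (nE + 1)))"
      using S\<epsilon> nE(1) unfolding \<rho>_def by (intro mult_left_mono) auto
    also have "\<dots> = \<delta> / 2" using nE(1) by (simp add: field_simps)
    finally have "(nE + 1) * (S * \<epsilon>) < \<delta>" using \<delta>(1) by linarith
    then have inU: "z \<in> U" if "norm (z - xs) \<le> (nE + 1) * (S * \<epsilon>)" for z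
      using that \<delta>(2) by (force simp: dist_norm norm_minus_commute)
    have "L' * (S * \<epsilon>) \<le> L' * (1 / (L' + 1))"
      using S\<epsilon> g_taylor(2) unfolding \<rho>_def by (intro mult_left_mono) auto
    also have "\<dots> \<le> 1" using g_taylor(2) by (simp add: field_simps)
    finally have L'_small: "L' * (S * \<epsilon>) \<le> 2" by linarith
    have xxU: "\<forall>i\<le>t. xx i \<in> U \<and> norm (xx i - xs) \<le> \<epsilon>"
      using xx \<epsilon>_le inU by fastforce
    have y_near: "norm (y - xs) \<le> S * \<epsilon>"
      unfolding y_def using xx by (intro norm_affine_comb_diff_le[OF _ c \<epsilon>]) auto
    then have yU: "y \<in> U" using \<epsilon>_le inU by fastforce
    have S\<epsilon>2: "0 \<le> S\<^sup>2 * \<epsilon>\<^sup>2" by simp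
    show "y \<in> V \<and> AP_next g vA t c xx \<in> \<Sigma> \<inter> V \<and>
      norm (f (AP_next g vA t c xx)) \<le> K * norm (\<Sum>i\<le>t. c i *\<^sub>R f (xx i)) + (GP + GA) * S\<^sup>2 * \<epsilon>\<^sup>2"
    proof (cases vA)
      case True
      have g_near: "norm (g x - xs) \<le> (nE + 1) * e"
        if "x \<in> U" "norm (x - xs) \<le> e" "L' * e \<le> 2" for x e
        using g_taylor(2,3) that nE by (intro norm_diff_le_of_taylor) auto
      have "L' * \<epsilon> \<le> 2"
        using L'_small \<epsilon>_le(1) g_taylor(2) by (meson mult_left_mono order_trans)
      then have "\<forall>i\<le>t. norm (g (xx i) - xs) \<le> (nE + 1) * \<epsilon>"
        using xxU g_near by blast
      then have "norm ((\<Sum>i\<le>t. c i *\<^sub>R g (xx i)) - xs) \<le> S * ((nE + 1) * \<epsilon>)"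
        using nE(1) \<epsilon> by (intro norm_affine_comb_diff_le[OF _ c]) auto
      then have zU: "(\<Sum>i\<le>t. c i *\<^sub>R g (xx i)) \<in> U" by (intro inU) (simp add: algebra_simps)
      have "norm (g y - xs) \<le> (nE + 1) * (S * \<epsilon>)"
        using g_near[OF yU y_near L'_small] .
      then have gyU: "g y \<in> U" by (rule inU)
      have "norm (f (\<Sum>i\<le>t. c i *\<^sub>R g (xx i))) \<le> K * norm (\<Sum>i\<le>t. c i *\<^sub>R f (xx i)) + GA * S\<^sup>2 * \<epsilon>\<^sup>2"
        unfolding GA_def using True version_A contr f_lip
        by (intro AP_step_A[OF f_taylor(1) bounded_linear.linear[OF g_taylor(1)] contr(1)
              f_taylor(2) g_taylor(2) f_lip(1) f_taylor(3) g_taylor(3) _ _ xxU \<epsilon> c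
              yU[unfolded y_def] gyU[unfolded y_def] zU]) auto
      moreover have "GA * S\<^sup>2 * \<epsilon>\<^sup>2 \<le> (GP + GA) * S\<^sup>2 * \<epsilon>\<^sup>2"
        using S\<epsilon>2 contr(1) f_taylor(2) P_taylor(2) f_lip(1) fg_lip(1) unfolding GP_def
        by (simp add: mult.assoc mult_right_mono)
      ultimately show ?thesis
        using True version_A U(3)[OF yU] U(3)[OF zU] by (auto simp: AP_next_def)
    next
      case False
      have "norm (f (g y)) \<le> K * norm (\<Sum>i\<le>t. c i *\<^sub>R f (xx i)) + GP * S\<^sup>2 * \<epsilon>\<^sup>2"
        unfolding GP_def y_def using xx xxU contr f_lip fg_lip P
        by (intro AP_step_P[OF f_taylor(1) P_taylor(1) contr(1) f_taylor(2) P_taylor(2) f_lip(1)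
              fg_lip(1) f_taylor(3) P_taylor(3) _ _ _ _ _ \<epsilon> c yU[unfolded y_def]]) auto
      moreover have "GP * S\<^sup>2 * \<epsilon>\<^sup>2 \<le> (GP + GA) * S\<^sup>2 * \<epsilon>\<^sup>2"
        using S\<epsilon>2 contr(1) f_taylor(2) g_taylor(2) f_lip(1) unfolding GA_def
        by (simp add: mult.assoc mult_right_mono)
      ultimately show ?thesis
        using False U(3)[OF yU] g_into by (auto simp: AP_next_def y_def)
    qed
  qed
  moreover have "0 < \<rho>" unfolding \<rho>_def using \<delta>(1) nE(1) g_taylor(2) by simp
  moreover have "0 \<le> GP + GA"
    unfolding GP_def GA_def using contr(1) f_taylor(2) g_taylor(2) P_taylor(2) f_lip(1) fg_lip(1)
      by simp
  ultimately show ?thesis by blast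
qed

section \<open>Convergence of restarted Anderson--Pulay runs\<close>

definition coeff_sum_sq_const :: "nat \<Rightarrow> real \<Rightarrow> real" where
  "coeff_sum_sq_const p \<mu> = 4 * (real p + 1)\<^sup>2 * (coeff_const p)\<^sup>2 / (1 - \<mu>) ^ (2 * p)"

lemma coeff_sum_sq_const_pos: "\<mu> < 1 \<Longrightarrow> 0 < coeff_sum_sq_const p \<mu>"
  unfolding coeff_sum_sq_const_def using coeff_const_ge_1[of p] by simp

lemma coeff_sum_bound_sq_le:
  fixes \<tau> \<mu> :: real
  assumes "0 < \<tau>" "\<tau> < 1" "0 < \<mu>" "\<mu> < 1" "t \<le> p"
  shows "(2 * (real p + 1) * coeff_const p / (\<tau> * (1 - \<mu>)) ^ t)\<^sup>2
           \<le> coeff_sum_sq_const p \<mu> / \<tau> ^ (2 * t)"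
proof -
  define N where "N = 4 * (real p + 1)\<^sup>2 * (coeff_const p)\<^sup>2"
  have "(2 * (real p + 1) * coeff_const p)\<^sup>2 = N"
    unfolding N_def by (simp add: power_mult_distrib power2_eq_square algebra_simps)
  moreover have "((\<tau> * (1 - \<mu>)) ^ t)\<^sup>2 = \<tau> ^ (2 * t) * (1 - \<mu>) ^ (2 * t)"
    by (simp add: power_mult_distrib power_mult[symmetric] mult.commute)
  ultimately have "(2 * (real p + 1) * coeff_const p / (\<tau> * (1 - \<mu>)) ^ t)\<^sup>2
      = N / (\<tau> ^ (2 * t) * (1 - \<mu>) ^ (2 * t))"
    by (simp add: power_divide)
  also have "\<dots> \<le> N / (\<tau> ^ (2 * t) * (1 - \<mu>) ^ (2 * p))"
    using assms by (intro divide_left_mono mult_left_mono power_decreasing) (auto simp: N_def)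
  also have "\<dots> = coeff_sum_sq_const p \<mu> / \<tau> ^ (2 * t)" unfolding coeff_sum_sq_const_def N_def
    by simp
  finally show ?thesis .
qed

lemma setcompr_shift_eq_image: "{h j | j. (b::nat) + 1 \<le> j \<and> j \<le> b + t} = (\<lambda>l. h (b + l)) ` {1..t}"
proof (rule set_eqI, rule iffI)
  fix v assume "v \<in> {h j | j. b + 1 \<le> j \<and> j \<le> b + t}"
  then obtain j where "v = h j" "b + 1 \<le> j" "j \<le> b + t" by blast
  then show "v \<in> (\<lambda>l. h (b + l)) ` {1..t}" by (intro image_eqI[of _ _ "j - b"]) auto
qed force

locale AP_convergence =
  fixes f :: "'a::euclidean_space \<Rightarrow> 'b::euclidean_space" and g :: "'a \<Rightarrow> 'a"
    and \<Sigma> V :: "'a set" and xs :: 'a and K \<sigma> \<rho> G :: real and vA :: bool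
  assumes step: "AP_step_bound f g \<Sigma> V xs K vA \<rho> G"
    and K: "0 \<le> K" and G: "0 \<le> G" and \<rho>: "0 < \<rho>"
    and \<sigma>: "0 < \<sigma>" "\<And>x. x \<in> V \<Longrightarrow> x \<in> \<Sigma> \<Longrightarrow> \<sigma> * norm (x - xs) \<le> norm (f x)"
begin

definition radius :: "nat \<Rightarrow> real \<Rightarrow> real" where
  "radius p \<mu> = min (\<rho> * \<sigma> / coeff_sum_sq_const p \<mu>)
      ((\<mu> - K) * \<mu> ^ p * \<sigma>\<^sup>2 / ((G + 1) * coeff_sum_sq_const p \<mu>))"

definition restart_const :: "nat \<Rightarrow> real \<Rightarrow> real" where
  "restart_const p \<mu> = G * coeff_sum_sq_const p \<mu> / \<sigma>\<^sup>2 + 1"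

lemma restart_const_pos: "\<mu> < 1 \<Longrightarrow> 0 < restart_const p \<mu>"
  unfolding restart_const_def using G coeff_sum_sq_const_pos[of \<mu> p]
  by (simp add: add_nonneg_pos)

lemma
  assumes "K < \<mu>" "\<mu> < 1"
  shows radius_pos: "0 < radius p \<mu>"
    and radius_small_for_step: "coeff_sum_sq_const p \<mu> * radius p \<mu> \<le> \<rho> * \<sigma>"
    and radius_small_for_contraction:
      "G * coeff_sum_sq_const p \<mu> * radius p \<mu> \<le> (\<mu> - K) * \<mu> ^ p * \<sigma>\<^sup>2"
proof -
  define Z where "Z = coeff_sum_sq_const p \<mu>"
  have Z: "0 < Z" unfolding Z_def using coeff_sum_sq_const_pos assms(2) by blast
  have \<mu>: "0 < \<mu>" using K assms(1) by linarith
  show "0 < radius p \<mu>"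
    unfolding radius_def Z_def[symmetric] using \<rho> \<sigma>(1) Z \<mu> G assms by simp
  have "radius p \<mu> \<le> \<rho> * \<sigma> / Z" unfolding radius_def Z_def by simp
  then show "coeff_sum_sq_const p \<mu> * radius p \<mu> \<le> \<rho> * \<sigma>"
    using Z unfolding Z_def by (simp add: pos_le_divide_eq mult.commute)
  have "radius p \<mu> \<le> (\<mu> - K) * \<mu> ^ p * \<sigma>\<^sup>2 / ((G + 1) * Z)" unfolding radius_def Z_def by simp
  then have "(G + 1) * Z * radius p \<mu> \<le> (\<mu> - K) * \<mu> ^ p * \<sigma>\<^sup>2"
    using Z G by (simp add: pos_le_divide_eq mult.commute)
  moreover have "G * Z * radius p \<mu> \<le> (G + 1) * Z * radius p \<mu>"
    using Z \<open>0 < radius p \<mu>\<close> by simp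
  ultimately show "G * coeff_sum_sq_const p \<mu> * radius p \<mu> \<le> (\<mu> - K) * \<mu> ^ p * \<sigma>\<^sup>2"
    unfolding Z_def by linarith
qed

end

locale AP_convergence_run = AP_convergence +
  fixes \<mu> \<tau> :: real and x0 :: "'a::euclidean_space" and x :: "nat \<Rightarrow> 'a"
    and r :: "nat \<Rightarrow> 'b::euclidean_space"
    and m :: "nat \<Rightarrow> nat" and c :: "nat \<Rightarrow> nat \<Rightarrow> real"
  assumes run: "AP_run f g \<tau> vA x0 x r m c"
    and \<mu>: "K < \<mu>" "\<mu> < 1" and \<tau>: "0 < \<tau>" "\<tau> < 1"
    and x0: "x0 \<in> \<Sigma>" "x0 \<in> V" "norm (f x0) \<le> radius DIM('b) \<mu> * \<tau> ^ (2 * DIM('b))"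
begin

lemma x_0: "x 0 = x0" and m_0: "m 0 = 0" and r_eq: "r k = f (x k)"
  and stopped: "r k = 0 \<Longrightarrow> m k = 0 \<and> x (Suc k) = x k"
  using run unfolding AP_run_def by auto

lemma
  assumes "r k \<noteq> 0"
  shows coeffs_sum: "(\<Sum>i\<le>m k. c k i) = 1"
    and coeffs_min: "(\<Sum>i\<le>m k. d i) = 1 \<Longrightarrow>
      norm (\<Sum>i\<le>m k. c k i *\<^sub>R r (k - m k + i)) \<le> norm (\<Sum>i\<le>m k. d i *\<^sub>R r (k - m k + i))"
    and x_Suc: "x (Suc k) = AP_next g vA (m k) (c k) (\<lambda>i. x (k - m k + i))"
    and m_Suc_raw: "r (Suc k) \<noteq> 0 \<Longrightarrow> m (Suc k) = (if \<tau> * norm (r (Suc k) - r (k - m k)) >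
         norm ((r (Suc k) - r (k - m k)) - orth_proj (span {r j - r (k - m k) | j. k - m k + 1 \<le> j \<and> j \<le> k})
                 (r (Suc k) - r (k - m k)))
         then 0 else Suc (m k))"
  using run assms unfolding AP_run_def AP_next_def Let_def by auto

lemma r_zero_stays: "r i = 0 \<Longrightarrow> i \<le> j \<Longrightarrow> r j = 0"
proof (induction j)
  case (Suc j)
  then show ?case using stopped r_eq by (metis le_Suc_eq)
qed simp

lemma m_le: "m k \<le> k"
proof (induction k)
  case (Suc k)
  show ?case
  proof (cases "r (Suc k) = 0")
    case True
    then show ?thesis using stopped by simp
  next
    case False
    then have "r k \<noteq> 0" using r_zero_stays[of k "Suc k"] by auto
    then show ?thesis using m_Suc_raw[OF \<open>r k \<noteq> 0\<close> False] Suc by auto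
  qed
qed (simp add: m_0)

lemma m_Suc:
  assumes "r k \<noteq> 0" "r (Suc k) \<noteq> 0"
  shows "m (Suc k) = (if \<tau> * norm (r (Suc k) - r (k - m k)) >
      norm ((r (Suc k) - r (k - m k)) -
        orth_proj (span ((\<lambda>j. r (k - m k + j) - r (k - m k)) ` {1..m k})) (r (Suc k) - r (k - m k)))
      then 0 else Suc (m k))"
  using m_Suc_raw[OF assms] setcompr_shift_eq_image[of "\<lambda>j. r j - r (k - m k)" "k - m k" "m k"] m_le[of k]
  by simp

lemma window:
  assumes "r k \<noteq> 0" "j \<le> m k"
  shows "m (k - m k + j) = j \<and> r (k - m k + j) \<noteq> 0"
proof -
  have "m (k - n) = m k - n \<and> r (k - n) \<noteq> 0" if "n \<le> m k" for n
    using that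
  proof (induction n)
    case (Suc n)
    then have IH: "m (k - n) = Suc (m k - Suc n)" "r (k - n) \<noteq> 0" by auto
    obtain i where i: "k - n = Suc i" using m_le[of "k - n"] IH(1) by (cases "k - n") auto
    have ri: "r i \<noteq> 0" using r_zero_stays[of i "k - n"] IH(2) i by auto
    have "m (Suc i) = Suc (m i)" using m_Suc_raw[OF ri] IH i by (auto split: if_splits)
    moreover have "k - Suc n = i" using i by simp
    ultimately show ?case using IH i ri by simp
  qed (simp add: assms(1))
  from this[of "m k - j"] show ?thesis using assms(2) m_le[of k] by simp
qed

definition window_diff :: "nat \<Rightarrow> nat \<Rightarrow> 'b" where
  "window_diff k j = r (k - m k + j) - r (k - m k)"

definition comb_residual :: "nat \<Rightarrow> 'b" where
  "comb_residual k = (\<Sum>i\<le>m k. c k i *\<^sub>R r (k - m k + i))"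

lemma comb_residual_le:
  assumes "r k \<noteq> 0"
  shows "norm (comb_residual k) \<le> norm (r k)"
proof -
  define d where "d = (\<lambda>i. if i = m k then 1 else (0::real))"
  have "(\<Sum>i\<le>m k. d i *\<^sub>R r (k - m k + i)) = r k"
    using m_le[of k] by (simp add: d_def if_distrib[of "\<lambda>a. a *\<^sub>R _"] cong: if_cong)
  then show ?thesis
    using coeffs_min[OF assms, of d] unfolding comb_residual_def d_def by simp
qed

lemma comb_residual_diff:
  assumes "r k \<noteq> 0"
  shows "comb_residual k - r (k - m k) = (\<Sum>j\<in>{1..m k}. c k j *\<^sub>R window_diff k j)"
proof -
  have c0: "c k 0 = 1 - (\<Sum>j\<in>{1..m k}. c k j)"
    using coeffs_sum[OF assms] sum_atMost_head_tail[of "c k" "m k"] by simp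
  show ?thesis
    unfolding comb_residual_def window_diff_def
    by (subst sum_atMost_head_tail)
      (simp add: c0 scaleR_diff_left scaleR_diff_right sum_subtractf scaleR_sum_left[symmetric])
qed

lemma window_residual:
  assumes "r k \<noteq> 0" "j \<in> {1..m k}"
  shows "\<tau> * norm (window_diff k j)
           \<le> norm (window_diff k j - orth_proj (span (window_diff k ` {1..<j})) (window_diff k j))"
proof -
  obtain j' where j': "j = Suc j'" using assms(2) by (cases j) auto
  define i where "i = k - m k + j'"
  have i: "r i \<noteq> 0" "m i = j'" "i - m i = k - m k"
    using window[OF assms(1), of j'] assms(2) j' unfolding i_def by auto
  have "r (Suc i) \<noteq> 0" "m (Suc i) = Suc j'"
    using window[OF assms(1), of j] assms(2) j' unfolding i_def by auto
  \<comment> \<open>Step i did not restart, so the restart test failed there.\<close>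
  then have "\<not> \<tau> * norm (r (Suc i) - r (i - m i)) > norm ((r (Suc i) - r (i - m i)) -
      orth_proj (span ((\<lambda>l. r (i - m i + l) - r (i - m i)) ` {1..m i})) (r (Suc i) - r (i - m i)))"
    using m_Suc[OF i(1)] by (auto split: if_splits)
  moreover have "{1..m i} = {1..<j}" using i(2) j' by auto
  moreover have "r (Suc i) - r (i - m i) = window_diff k j"
    unfolding window_diff_def using i(3) j' i_def by simp
  ultimately show ?thesis
    unfolding i(3) window_diff_def[abs_def] by simp
qed

definition step_ok :: "nat \<Rightarrow> bool" where
  "step_ok k \<longleftrightarrow>
     m k \<le> min k DIM('b) \<and>
     (\<forall>i\<le>m k. \<bar>c k i\<bar> \<le> coeff_const (m k) * (1 + 1 / (\<tau> * (1 - \<mu>)) ^ m k)) \<and>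
     norm (r (Suc k)) \<le> \<mu> ^ (m k + 1) * norm (r (k - m k)) \<and>
     (\<Sum>i\<le>m k. c k i *\<^sub>R x (k - m k + i)) \<in> V \<and> x (Suc k) \<in> \<Sigma> \<and> x (Suc k) \<in> V \<and>
     (m (Suc k) = 0 \<longrightarrow> (1 - K * (1 + \<tau>)) * norm (r (Suc k))
        \<le> (K * \<tau> + restart_const DIM('b) \<mu> / \<tau> ^ (2 * m k) * norm (r (k - m k))) * norm (r (k - m k)))"

lemma iterates_upto:
  assumes IH: "\<forall>j<k. r j \<noteq> 0 \<longrightarrow> step_ok j" and "i \<le> k"
  shows "x i \<in> \<Sigma> \<and> x i \<in> V \<and> norm (r i) \<le> \<mu> ^ i * norm (r 0)"
  using assms(2)
proof (induction i rule: less_induct)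
  case (less i)
  have \<mu>0: "0 \<le> \<mu>" using K \<mu>(1) by linarith
  show ?case
  proof (cases i)
    case 0
    then show ?thesis using x0 x_0 by simp
  next
    case (Suc j)
    have xj: "x j \<in> \<Sigma> \<and> x j \<in> V \<and> norm (r j) \<le> \<mu> ^ j * norm (r 0)"
      using less Suc by simp
    show ?thesis
    proof (cases "r j = 0")
      case True
      then show ?thesis using stopped r_eq xj Suc \<mu>0
        by (metis norm_zero zero_le_mult_iff zero_le_power norm_ge_zero)
    next
      case False
      then have ok: "step_ok j" using IH less.prems Suc by simp
      have "norm (r (j - m j)) \<le> \<mu> ^ (j - m j) * norm (r 0)"
        using less Suc by simp
      then have "\<mu> ^ (m j + 1) * norm (r (j - m j)) \<le> \<mu> ^ (m j + 1) * (\<mu> ^ (j - m j) * norm (r 0))"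
        using \<mu>0 by (simp add: mult_left_mono)
      also have "\<dots> = \<mu> ^ i * norm (r 0)"
        using m_le[of j] Suc by (simp add: power_add[symmetric] mult.assoc)
      finally show ?thesis using ok Suc unfolding step_ok_def by simp
    qed
  qed
qed

definition coeff_sum_bound :: "nat \<Rightarrow> real" where
  "coeff_sum_bound k = 2 * (real DIM('b) + 1) * coeff_const DIM('b) / (\<tau> * (1 - \<mu>)) ^ m k"

context
  fixes k :: nat
  assumes IH: "\<forall>j<k. r j \<noteq> 0 \<longrightarrow> step_ok j" and live: "r k \<noteq> 0"
begin

lemma window_base_pos: "0 < norm (r (k - m k))"
  using window[OF live, of 0] by simp

lemma window_decay:
  assumes "j \<le> m k"
  shows "norm (r (k - m k + j)) \<le> \<mu> ^ j * norm (r (k - m k))"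
proof (cases j)
  case (Suc j')
  define i where "i = k - m k + j'"
  have i: "i < k" "r i \<noteq> 0" "m i = j'"
    using window[OF live, of j'] assms Suc m_le[of k] unfolding i_def by auto
  then have "step_ok i" using IH by simp
  moreover have "i - m i = k - m k" "Suc i = k - m k + j" using i(3) Suc unfolding i_def by auto
  ultimately show ?thesis using i(3) Suc unfolding step_ok_def by simp
qed simp

lemma window_diff_bounds:
  assumes "j \<in> {1..m k}"
  shows "(1 - \<mu>) * norm (r (k - m k)) \<le> norm (window_diff k j)"
    and "norm (window_diff k j) \<le> 2 * norm (r (k - m k))"
proof -
  have "0 \<le> \<mu>" using K \<mu>(1) by linarith
  then have "\<mu> ^ j \<le> \<mu> ^ 1" using assms \<mu>(2) by (intro power_decreasing) auto
  then have "norm (r (k - m k + j)) \<le> \<mu> * norm (r (k - m k))"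
    using window_decay[of j] assms mult_right_mono[of "\<mu> ^ j" \<mu> "norm (r (k - m k))"] by simp
  moreover have "\<mu> * norm (r (k - m k)) \<le> norm (r (k - m k))"
    using \<mu>(2) window_base_pos by simp
  ultimately show "(1 - \<mu>) * norm (r (k - m k)) \<le> norm (window_diff k j)"
    and "norm (window_diff k j) \<le> 2 * norm (r (k - m k))"
    unfolding window_diff_def
    using norm_triangle_ineq2[of "r (k - m k)" "r (k - m k + j)"]
      norm_triangle_ineq4[of "r (k - m k + j)" "r (k - m k)"]
    by (auto simp: algebra_simps norm_minus_commute)
qed

lemma window_residual_lower:
  assumes "j \<in> {1..m k}"
  shows "\<tau> * (1 - \<mu>) * norm (r (k - m k))
           \<le> norm (window_diff k j - orth_proj (span (window_diff k ` {1..<j})) (window_diff k j))"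
proof -
  have "\<tau> * ((1 - \<mu>) * norm (r (k - m k))) \<le> \<tau> * norm (window_diff k j)"
    using window_diff_bounds(1)[OF assms] \<tau>(1) by (intro mult_left_mono) auto
  then show ?thesis using window_residual[OF live assms] by (simp add: mult.assoc)
qed

lemma m_le_DIM: "m k \<le> DIM('b)"
proof (rule le_DIM_if_orth_residuals_pos, intro ballI)
  fix j assume "j \<in> {1..m k}"
  then show "0 < norm (window_diff k j - orth_proj (span (window_diff k ` {1..<j})) (window_diff k j))"
    using window_residual_lower[of j] \<tau>(1) \<mu>(2) window_base_pos
    by (meson diff_gt_0_iff_gt less_le_trans mult_pos_pos)
qed

lemma coeff_bound:
  assumes "i \<le> m k"
  shows "\<bar>c k i\<bar> \<le> coeff_const (m k) * (1 + 1 / (\<tau> * (1 - \<mu>)) ^ m k)"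
proof (rule window_coeff_bound[OF _ _ window_base_pos _ _ _ coeffs_sum[OF live] assms])
  show "0 < \<tau> * (1 - \<mu>)" "\<tau> * (1 - \<mu>) < 1"
    using \<tau> \<mu> K mult_strict_mono[of \<tau> 1 "1 - \<mu>" 1] by auto
  show "\<forall>j\<in>{1..m k}. \<tau> * (1 - \<mu>) * norm (r (k - m k))
          \<le> norm (window_diff k j - orth_proj (span (window_diff k ` {1..<j})) (window_diff k j))"
    using window_residual_lower by blast
  show "\<forall>j\<in>{1..m k}. norm (window_diff k j) \<le> 2 * norm (r (k - m k))"
    using window_diff_bounds(2) by blast
  have "\<mu> ^ m k \<le> 1" using \<mu> K by (simp add: power_le_one)
  then have "norm (r k) \<le> norm (r (k - m k))"
    using window_decay[of "m k"] m_le[of k] mult_right_mono[of "\<mu> ^ m k" 1 "norm (r (k - m k))"]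
    by simp
  then show "norm (\<Sum>j\<in>{1..m k}. c k j *\<^sub>R window_diff k j) \<le> 2 * norm (r (k - m k))"
    using comb_residual_diff[OF live] comb_residual_le[OF live]
      norm_triangle_ineq4[of "comb_residual k" "r (k - m k)"] by simp
qed

lemma coeff_abs_sum_le: "(\<Sum>i\<le>m k. \<bar>c k i\<bar>) \<le> coeff_sum_bound k"
proof -
  define X where "X = \<tau> * (1 - \<mu>)"
  have X: "0 < X ^ m k" "X ^ m k \<le> 1"
    unfolding X_def using \<tau> \<mu> K by (auto intro!: power_le_one mult_le_one)
  have "(\<Sum>i\<le>m k. \<bar>c k i\<bar>) \<le> real (card {..m k}) * (coeff_const (m k) * (1 + 1 / X ^ m k))"
    by (rule sum_bounded_above) (use coeff_bound in \<open>auto simp: X_def\<close>)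
  also have "\<dots> \<le> (real DIM('b) + 1) * (coeff_const DIM('b) * (2 / X ^ m k))"
  proof (intro mult_mono)
    show "real (card {..m k}) \<le> real DIM('b) + 1" using m_le_DIM by simp
    show "coeff_const (m k) \<le> coeff_const DIM('b)" using coeff_const_mono[OF m_le_DIM] .
    have "1 \<le> 1 / X ^ m k" "2 / X ^ m k = 1 / X ^ m k + 1 / X ^ m k" using X by simp_all
    then show "1 + 1 / X ^ m k \<le> 2 / X ^ m k" by linarith
  qed (use coeff_const_ge_1[of "m k"] coeff_const_ge_1[of "DIM('b)"] X in auto)
  also have "\<dots> = coeff_sum_bound k" unfolding coeff_sum_bound_def X_def by (simp add: algebra_simps)
  finally show ?thesis .
qed

lemma coeff_sum_bound_sq: "(coeff_sum_bound k)\<^sup>2 \<le> coeff_sum_sq_const DIM('b) \<mu> / \<tau> ^ (2 * m k)"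
  unfolding coeff_sum_bound_def using coeff_sum_bound_sq_le[OF \<tau> _ \<mu>(2) m_le_DIM] K \<mu>(1) by simp

lemma coeff_sum_bound_sq_base:
  "(coeff_sum_bound k)\<^sup>2 * norm (r (k - m k)) \<le> coeff_sum_sq_const DIM('b) \<mu> * radius DIM('b) \<mu>"
proof -
  have "norm (r (k - m k)) \<le> \<mu> ^ (k - m k) * norm (r 0)"
    using iterates_upto[OF IH, of "k - m k"] by simp
  also have "\<dots> \<le> norm (r 0)"
    using \<mu> K by (simp add: mult_left_le_one_le power_le_one)
  also have "\<dots> \<le> radius DIM('b) \<mu> * \<tau> ^ (2 * DIM('b))" using x0(3) r_eq[of 0] x_0 by simp
  also have "\<dots> \<le> radius DIM('b) \<mu> * \<tau> ^ (2 * m k)"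
    using \<tau> m_le_DIM radius_pos[OF \<mu>, of "DIM('b)"] by (intro mult_left_mono power_decreasing) auto
  finally have base: "norm (r (k - m k)) \<le> radius DIM('b) \<mu> * \<tau> ^ (2 * m k)" .
  have "(coeff_sum_bound k)\<^sup>2 * norm (r (k - m k))
      \<le> coeff_sum_sq_const DIM('b) \<mu> / \<tau> ^ (2 * m k) * (radius DIM('b) \<mu> * \<tau> ^ (2 * m k))"
    using coeff_sum_bound_sq base coeff_sum_sq_const_pos[OF \<mu>(2), of "DIM('b)"] \<tau>(1)
    by (intro mult_mono) auto
  also have "\<dots> = coeff_sum_sq_const DIM('b) \<mu> * radius DIM('b) \<mu>"
    using \<tau>(1) by simp
  finally show ?thesis .
qed

text \<open>The window iterates lie within n / \<sigma> of xs (n the residual at the window start), and the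
  choice of radius keeps S n / \<sigma> below \<rho> and the second-order term of the one-step estimate
  below both bounds needed later.\<close>

lemma one_step:
  shows "(\<Sum>i\<le>m k. c k i *\<^sub>R x (k - m k + i)) \<in> V" and "x (Suc k) \<in> \<Sigma>" "x (Suc k) \<in> V"
    and "norm (r (Suc k)) \<le> K * norm (comb_residual k)
           + min ((\<mu> - K) * \<mu> ^ m k * norm (r (k - m k)))
                 (restart_const DIM('b) \<mu> / \<tau> ^ (2 * m k) * (norm (r (k - m k)))\<^sup>2)"
proof -
  define n where "n = norm (r (k - m k))"
  define S where "S = coeff_sum_bound k"
  define \<epsilon> where "\<epsilon> = n / \<sigma>"
  define Z where "Z = coeff_sum_sq_const DIM('b) \<mu>"
  define R where "R = radius DIM('b) \<mu>"
  have n: "0 < n" using window_base_pos unfolding n_def .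
  have S_sum: "(\<Sum>i\<le>m k. \<bar>c k i\<bar>) \<le> S" using coeff_abs_sum_le unfolding S_def .
  have S1: "1 \<le> S" using one_le_sum_abs[OF coeffs_sum[OF live] S_sum] .
  have S2n: "S\<^sup>2 * n \<le> Z * R" using coeff_sum_bound_sq_base unfolding S_def n_def Z_def R_def .
  have "S * n \<le> S\<^sup>2 * n" using S1 n by (simp add: power2_eq_square mult_right_mono)
  then have "S * n \<le> \<rho> * \<sigma>"
    using S2n radius_small_for_step[OF \<mu>, of "DIM('b)"] unfolding Z_def R_def by linarith
  then have S\<epsilon>: "S * \<epsilon> \<le> \<rho>" unfolding \<epsilon>_def using \<sigma>(1) by (simp add: pos_divide_le_eq)
  have \<epsilon>: "0 \<le> \<epsilon>" using n \<sigma>(1) unfolding \<epsilon>_def by simp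
  have near: "\<forall>i\<le>m k. x (k - m k + i) \<in> \<Sigma> \<and> norm (x (k - m k + i) - xs) \<le> \<epsilon>"
  proof (intro allI impI)
    fix i assume i: "i \<le> m k"
    have xi: "x (k - m k + i) \<in> \<Sigma>" "x (k - m k + i) \<in> V"
      using iterates_upto[OF IH, of "k - m k + i"] i m_le[of k] by auto
    have "\<sigma> * norm (x (k - m k + i) - xs) \<le> norm (r (k - m k + i))" using \<sigma>(2)[OF xi(2,1)] r_eq
      by simp
    also have "\<dots> \<le> \<mu> ^ i * n" using window_decay[OF i] unfolding n_def .
    also have "\<dots> \<le> n" using \<mu> K n by (simp add: mult_left_le_one_le power_le_one)
    finally show "x (k - m k + i) \<in> \<Sigma> \<and> norm (x (k - m k + i) - xs) \<le> \<epsilon>"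
      using xi \<sigma>(1) unfolding \<epsilon>_def by (simp add: pos_le_divide_eq mult.commute)
  qed
  note est = AP_step_boundD[where x="\<lambda>i. x (k - m k + i)",
      OF step near[rule_format] coeffs_sum[OF live] S_sum \<epsilon> S\<epsilon>]
  show "(\<Sum>i\<le>m k. c k i *\<^sub>R x (k - m k + i)) \<in> V" "x (Suc k) \<in> \<Sigma>" "x (Suc k) \<in> V"
    using est x_Suc[OF live] by simp_all
  have "(\<Sum>i\<le>m k. c k i *\<^sub>R f (x (k - m k + i))) = comb_residual k"
    unfolding comb_residual_def using r_eq by simp
  then have bound: "norm (r (Suc k)) \<le> K * norm (comb_residual k) + G * S\<^sup>2 * \<epsilon>\<^sup>2"
    using est x_Suc[OF live] r_eq[of "Suc k"] by simp
  have "G * S\<^sup>2 * \<epsilon>\<^sup>2 \<le> (\<mu> - K) * \<mu> ^ m k * n"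
  proof -
    have "G * S\<^sup>2 * \<epsilon>\<^sup>2 = G * (S\<^sup>2 * n) * n / \<sigma>\<^sup>2" unfolding \<epsilon>_def by (simp add: power2_eq_square)
    also have "\<dots> \<le> G * (Z * R) * n / \<sigma>\<^sup>2"
      using S2n G n by (intro divide_right_mono mult_right_mono mult_left_mono) auto
    also have "\<dots> \<le> (\<mu> - K) * \<mu> ^ DIM('b) * \<sigma>\<^sup>2 * n / \<sigma>\<^sup>2"
      using radius_small_for_contraction[OF \<mu>] n unfolding Z_def R_def
      by (intro divide_right_mono mult_right_mono) (auto simp: mult.assoc)
    also have "\<dots> = (\<mu> - K) * \<mu> ^ DIM('b) * n" using \<sigma>(1) by simp
    also have "\<dots> \<le> (\<mu> - K) * \<mu> ^ m k * n"
      using \<mu> K n m_le_DIM by (intro mult_right_mono mult_left_mono power_decreasing) auto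
    finally show ?thesis .
  qed
  moreover have "G * S\<^sup>2 * \<epsilon>\<^sup>2 \<le> restart_const DIM('b) \<mu> / \<tau> ^ (2 * m k) * n\<^sup>2"
  proof -
    have "G * S\<^sup>2 * \<epsilon>\<^sup>2 = G * S\<^sup>2 * n\<^sup>2 / \<sigma>\<^sup>2" unfolding \<epsilon>_def by (simp add: power_divide)
    also have "\<dots> \<le> G * (Z / \<tau> ^ (2 * m k)) * n\<^sup>2 / \<sigma>\<^sup>2"
      using coeff_sum_bound_sq G unfolding S_def Z_def
      by (intro divide_right_mono mult_right_mono mult_left_mono) auto
    also have "\<dots> = (G * Z / \<sigma>\<^sup>2) / \<tau> ^ (2 * m k) * n\<^sup>2" by simp
    also have "\<dots> \<le> restart_const DIM('b) \<mu> / \<tau> ^ (2 * m k) * n\<^sup>2"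
      unfolding restart_const_def Z_def using \<tau> by (intro mult_right_mono divide_right_mono) auto
    finally show ?thesis .
  qed
  ultimately show "norm (r (Suc k)) \<le> K * norm (comb_residual k)
           + min ((\<mu> - K) * \<mu> ^ m k * norm (r (k - m k)))
                 (restart_const DIM('b) \<mu> / \<tau> ^ (2 * m k) * (norm (r (k - m k)))\<^sup>2)"
    using bound unfolding n_def by simp
qed

lemma step_ok_step: "step_ok k"
proof -
  define n where "n = norm (r (k - m k))"
  have "norm (r k) \<le> \<mu> ^ m k * n"
    using window_decay[of "m k"] m_le[of k] unfolding n_def by simp
  then have "K * norm (comb_residual k) \<le> K * (\<mu> ^ m k * n)"
    using comb_residual_le[OF live] K by (intro mult_left_mono) auto
  then have contraction: "norm (r (Suc k)) \<le> \<mu> ^ (m k + 1) * n"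
    using one_step(4) unfolding n_def[symmetric] by (simp add: algebra_simps)
  have restart: "(1 - K * (1 + \<tau>)) * norm (r (Suc k))
      \<le> (K * \<tau> + restart_const DIM('b) \<mu> / \<tau> ^ (2 * m k) * n) * n" if "m (Suc k) = 0"
  proof (cases "r (Suc k) = 0")
    case True
    then show ?thesis
      using K \<tau> restart_const_pos[OF \<mu>(2), of "DIM('b)"] unfolding n_def by simp
  next
    case False
    \<comment> \<open>A restart means the new difference is almost in the span of the previous ones.\<close>
    have "norm ((r (Suc k) - r (k - m k + 0)) -
        orth_proj (span ((\<lambda>j. r (k - m k + j) - r (k - m k + 0)) ` {1..m k})) (r (Suc k) - r (k - m k + 0)))
        < \<tau> * norm (r (Suc k) - r (k - m k + 0))"
      using m_Suc[OF live False] that by (auto split: if_splits)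
    from affine_min_le_of_restart[where r="\<lambda>i. r (k - m k + i)", OF coeffs_min[OF live] this]
    have "norm (comb_residual k) \<le> norm (r (Suc k)) + \<tau> * (norm (r (Suc k)) + n)"
      using \<tau>(1) unfolding comb_residual_def n_def by simp
    then have "K * norm (comb_residual k) \<le> K * (norm (r (Suc k)) + \<tau> * (norm (r (Suc k)) + n))"
      using K by (intro mult_left_mono) auto
    then show ?thesis
      using one_step(4) unfolding n_def[symmetric] by (simp add: algebra_simps power2_eq_square)
  qed
  show ?thesis
    unfolding step_ok_def n_def[symmetric]
    using m_le[of k] m_le_DIM coeff_bound contraction one_step(1-3) restart by simp
qed

end

lemma step_ok: "r k \<noteq> 0 \<Longrightarrow> step_ok k"
  by (induction k rule: less_induct) (use step_ok_step in blast)

lemma iterates: "x k \<in> \<Sigma> \<and> x k \<in> V \<and> norm (r k) \<le> \<mu> ^ k * norm (r 0)"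
  using iterates_upto[of k k] step_ok by blast

lemma restart_bound:
  assumes "m (Suc k) = 0"
  shows "(1 - K * (1 + \<tau>)) * norm (r (Suc k))
           \<le> (K * \<tau> + restart_const DIM('b) \<mu> / \<tau> ^ (2 * m k) * norm (r (k - m k))) * norm (r (k - m k))"
proof (cases "r k = 0")
  case True
  then have "r (Suc k) = 0" using r_zero_stays[of k "Suc k"] by simp
  then show ?thesis using True stopped[OF True] by simp
next
  case False
  then show ?thesis using step_ok[OF False] assms unfolding step_ok_def by blast
qed

end

context AP_convergence
begin

theorem convergence:
  assumes "K < \<mu>" "\<mu> < 1"
  shows "\<exists>R>0. \<exists>\<Gamma>>0. \<forall>\<tau> x0 x r m c.
      0 < \<tau> \<and> \<tau> < 1 \<and> x0 \<in> V \<and> x0 \<in> \<Sigma> \<and> norm (f x0) \<le> R * \<tau> ^ (2 * DIM('b)) \<and>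
      AP_run f g \<tau> vA x0 x r m c
      \<longrightarrow>
      (\<forall>k. x k \<in> V \<and> (r k \<noteq> 0 \<longrightarrow> (\<Sum>i\<le>m k. c k i *\<^sub>R x (k - m k + i)) \<in> V)) \<and>
      (\<forall>k. r k \<noteq> 0 \<longrightarrow>
           m k \<le> min k DIM('b) \<and>
           (\<forall>i\<le>m k. \<bar>c k i\<bar> \<le> coeff_const (m k) * (1 + 1 / (\<tau> * (1 - \<mu>)) ^ m k)) \<and>
           norm (r (Suc k)) \<le> \<mu> ^ (m k + 1) * norm (r (k - m k))) \<and>
      (\<forall>k. norm (r k) \<le> \<mu> ^ k * norm (r 0)) \<and>
      (\<forall>k. m (Suc k) = 0 \<longrightarrow>
           (1 - K * (1 + \<tau>)) * norm (r (Suc k))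
             \<le> (K * \<tau> + \<Gamma> / \<tau> ^ (2 * m k) * norm (r (k - m k))) * norm (r (k - m k)))"
proof (rule exI[of _ "radius DIM('b) \<mu>"], rule conjI[OF radius_pos[OF assms]],
    rule exI[of _ "restart_const DIM('b) \<mu>"], rule conjI[OF restart_const_pos[OF assms(2)]],
    intro allI impI conjI)
  fix \<tau> x0 x r m c
  assume "0 < \<tau> \<and> \<tau> < 1 \<and> x0 \<in> V \<and> x0 \<in> \<Sigma> \<and> norm (f x0) \<le> radius DIM('b) \<mu> * \<tau> ^ (2 * DIM('b)) \<and>
      AP_run f g \<tau> vA x0 x r m c"
  then interpret AP_convergence_run f g \<Sigma> V xs K \<sigma> \<rho> G vA \<mu> \<tau> x0 x r m c
    using assms by unfold_locales auto
  show "x k \<in> V" "r k \<noteq> 0 \<Longrightarrow> (\<Sum>i\<le>m k. c k i *\<^sub>R x (k - m k + i)) \<in> V"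
    and "r k \<noteq> 0 \<Longrightarrow> m k \<le> min k DIM('b)"
    and "r k \<noteq> 0 \<Longrightarrow> i \<le> m k \<Longrightarrow> \<bar>c k i\<bar> \<le> coeff_const (m k) * (1 + 1 / (\<tau> * (1 - \<mu>)) ^ m k)"
    and "r k \<noteq> 0 \<Longrightarrow> norm (r (Suc k)) \<le> \<mu> ^ (m k + 1) * norm (r (k - m k))"
    and "norm (r k) \<le> \<mu> ^ k * norm (r 0)" for k i
    using iterates step_ok unfolding step_ok_def by blast+
  show "m (Suc k) = 0 \<Longrightarrow> (1 - K * (1 + \<tau>)) * norm (r (Suc k))
      \<le> (K * \<tau> + restart_const DIM('b) \<mu> / \<tau> ^ (2 * m k) * norm (r (k - m k))) * norm (r (k - m k))" for k
    by (rule restart_bound)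
qed

end

lemma ex_pos_all_imp_strengthen:
  assumes "\<exists>R>0. \<exists>\<Gamma>>0. \<forall>\<tau> x0 x r m c. A R \<tau> x0 x r m c \<longrightarrow> B \<Gamma> \<tau> x0 x r m c"
    and "\<And>R \<tau> x0 x r m c. A' R \<tau> x0 x r m c \<Longrightarrow> A R \<tau> x0 x r m c"
  shows "\<exists>R>0. \<exists>\<Gamma>>0. \<forall>\<tau> x0 x r m c. A' R \<tau> x0 x r m c \<longrightarrow> B \<Gamma> \<tau> x0 x r m c"
proof -
  obtain R \<Gamma> where "0 < R" "0 < \<Gamma>" "\<forall>\<tau> x0 x r m c. A R \<tau> x0 x r m c \<longrightarrow> B \<Gamma> \<tau> x0 x r m c"
    using assms(1) by blast
  then show ?thesis using assms(2) by (intro exI[of _ R] exI[of _ \<Gamma>] conjI allI impI) auto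
qed

theorem theorem3p1:
  fixes f :: "'a::euclidean_space \<Rightarrow> 'b::euclidean_space"
    and g :: "'a \<Rightarrow> 'a"
    and \<Sigma> V U :: "'a set"
    and xs :: 'a
    and K \<sigma> :: real
    and vA :: bool
  assumes manifold: "smooth_submanifold \<Sigma>"
    and V_open: "open V"
    and f_C2: "Ck_on 2 V f"
    and g_C2: "Ck_on 2 V g" and g_into: "g ` V \<subseteq> \<Sigma>"
    and xs_in: "xs \<in> V" "xs \<in> \<Sigma>" and g_fix: "g xs = xs" and f_zero: "f xs = 0"
    and assm1: "0 < K" "K < 1"
      "\<And>x. x \<in> V \<Longrightarrow> g x \<in> V \<Longrightarrow> x \<in> \<Sigma> \<Longrightarrow> norm (f (g x)) \<le> K * norm (f x)"
    and assm2: "\<sigma> > 0" "\<And>x. x \<in> V \<Longrightarrow> x \<in> \<Sigma> \<Longrightarrow> \<sigma> * norm (x - xs) \<le> norm (f x)"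
    and U_open: "open U" and xs_U: "xs \<in> U"
    and U_sub: "\<And>x. x \<in> U \<Longrightarrow> x \<in> V \<and> g x \<in> V"
    and U_i: "\<And>x y. x \<in> U \<Longrightarrow> y \<in> U \<Longrightarrow>
        norm (f x - f y) \<le> 2 * onorm (frechet_derivative f (at xs)) * norm (x - y)"
      "\<And>x y. x \<in> U \<Longrightarrow> y \<in> U \<Longrightarrow>
        norm (f (g x) - f (g y))
          \<le> 2 * onorm (frechet_derivative f (at xs) \<circ> frechet_derivative g (at xs)) * norm (x - y)"
    and U_ii: "\<exists>L L'. L > 0 \<and> L' > 0 \<and>
        (\<forall>x\<in>U. norm (f x - frechet_derivative f (at xs) (x - xs)) \<le> L / 2 * (norm (x - xs))\<^sup>2) \<and>
        (\<forall>x\<in>U. norm (g x - xs - frechet_derivative g (at xs) (x - xs)) \<le> L' / 2 * (norm (x - xs))\<^sup>2)"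
    and U_iii: "\<forall>x\<in>U. \<exists>!y. y \<in> \<Sigma> \<and> (\<forall>z\<in>\<Sigma>. dist x y \<le> dist x z)"
      "\<forall>x\<in>U. nearest_proj \<Sigma> x \<in> U"
      "smooth_on U (nearest_proj \<Sigma>)"
      "\<exists>M>0. \<forall>x\<in>U. norm (nearest_proj \<Sigma> x - (xs + orth_proj (tangent_space \<Sigma> xs) (x - xs)))
                        \<le> M / 2 * (norm (x - xs))\<^sup>2"
    and versionA: "vA \<longrightarrow> \<Sigma> = UNIV"
  shows "\<exists>C::nat \<Rightarrow> real. (\<forall>j. C j > 0) \<and>
    (\<forall>\<mu>. K < \<mu> \<and> \<mu> < 1 \<longrightarrow>
      (\<exists>R > 0. \<exists>\<Gamma> > 0. \<forall>\<tau> x0 x r m c.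
         0 < \<tau> \<and> \<tau> < 1 \<and> x0 \<in> U \<and> x0 \<in> \<Sigma> \<and>
         0 < norm (f x0) \<and> norm (f x0) \<le> R * \<tau> ^ (2 * DIM('b)) \<and>
         AP_run f g \<tau> vA x0 x r m c
         \<longrightarrow>
         (\<forall>k. x k \<in> V \<and>
              (r k \<noteq> 0 \<longrightarrow> (\<Sum>i\<le>m k. c k i *\<^sub>R x (k - m k + i)) \<in> V)) \<and>
         (\<forall>k. r k \<noteq> 0 \<longrightarrow>
              m k \<le> min k DIM('b) \<and>
              (\<forall>i\<le>m k. \<bar>c k i\<bar> \<le> C (m k) * (1 + 1 / (\<tau> * (1 - \<mu>)) ^ m k)) \<and>
              norm (r (Suc k)) \<le> \<mu> ^ (m k + 1) * norm (r (k - m k))) \<and>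
         (\<forall>k. norm (r k) \<le> \<mu> ^ k * norm (r 0)) \<and>
         (\<forall>k. m (Suc k) = 0 \<longrightarrow>
              (1 - K * (1 + \<tau>)) * norm (r (Suc k))
                \<le> (K * \<tau> + \<Gamma> / \<tau> ^ (2 * m k) * norm (r (k - m k))) * norm (r (k - m k)))))"
proof -
  let ?D = "frechet_derivative f (at xs)" and ?E = "frechet_derivative g (at xs)"
  have D: "bounded_linear ?D" and E: "bounded_linear ?E"
    using Ck_on_bounded_linear_derivative[OF f_C2] Ck_on_bounded_linear_derivative[OF g_C2] xs_in
    by auto
  obtain L L' where L: "0 < L" "0 < L'"
    "\<forall>x\<in>U. norm (f x - ?D (x - xs)) \<le> L / 2 * (norm (x - xs))\<^sup>2"
    "\<forall>x\<in>U. norm (g x - xs - ?E (x - xs)) \<le> L' / 2 * (norm (x - xs))\<^sup>2"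
    using U_ii by blast
  obtain M where M: "0 < M"
    "\<forall>x\<in>U. norm (nearest_proj \<Sigma> x - (xs + orth_proj (tangent_space \<Sigma> xs) (x - xs)))
      \<le> M / 2 * (norm (x - xs))\<^sup>2"
    using U_iii(4) by blast
  have P: "\<forall>x\<in>U. nearest_proj \<Sigma> x \<in> U \<and> nearest_proj \<Sigma> x \<in> \<Sigma> \<and>
      (x \<in> \<Sigma> \<longrightarrow> nearest_proj \<Sigma> x = x)"
    using U_iii(2) nearest_proj_in[OF U_iii(1)[rule_format]] by (simp add: nearest_proj_self)
  have contr: "\<And>x. x \<in> U \<Longrightarrow> x \<in> \<Sigma> \<Longrightarrow> norm (f (g x)) \<le> K * norm (f x)"
    using assm1(3) U_sub by blast
  have lip: "0 \<le> 2 * onorm ?D" "0 \<le> 2 * onorm (?D \<circ> ?E)"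
    using onorm_pos_le[OF D] onorm_pos_le[OF bounded_linear_compose[OF D E]] by (simp_all add: comp_def)
  obtain \<rho> G where "0 < \<rho>" "0 \<le> G" "AP_step_bound f g \<Sigma> V xs K vA \<rho> G"
    using AP_step_estimate[OF U_open xs_U U_sub g_into less_imp_le[OF assm1(1)] contr
        lip(1) U_i(1) lip(2) U_i(2) bounded_linear.linear[OF D] less_imp_le[OF L(1)] L(3)
        E less_imp_le[OF L(2)] L(4) P
        linear_orth_proj[OF subspace_tangent_space[OF manifold xs_in(2)]] less_imp_le[OF M(1)] M(2)
        versionA]
    by blast
  then interpret AP_convergence f g \<Sigma> V xs K \<sigma> \<rho> G vA
    using assm1 assm2 by unfold_locales auto
  show ?thesis
  proof (intro exI[of _ coeff_const] conjI allI impI)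
    show "0 < coeff_const j" for j using coeff_const_ge_1[of j] by simp
  qed (elim conjE, rule ex_pos_all_imp_strengthen[OF convergence], assumption+, auto dest: U_sub)
qed

end
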